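(* For all radial $\mathbf u=(u_1,u_2),\mathbf v=(v_1,v_2)\in C^\infty(\overline{\mathbb B^6_1})\times C^\infty(\overline{\mathbb B^6_1})$, \[\|\mathbf N(\mathbf u)\|_{\mathcal H}\lesssim\|u_1\|^2_{L^{12}}+\|u_1\|^3_{L^9}+\|u_1\|^4_{L^8}+\|u_1'\|^2_{L^4}\] and \begin{align*}\|\mathbf N(\mathbf u)-\mathbf N(\mathbf v)\|_{\mathcal H}\lesssim{}&\|u_1-v_1\|_{L^{12}}\Big(\|u_1\|_{L^{12}}+\|v_1\|_{L^{12}}+\|u_1\|^2_{L^8}+\|v_1\|^2_{L^8}+\|u_1'\|_{L^4}\big(1+\|u_1\|_{L^6}+\|v_1\|_{L^6}\big)\\&+\|u_1\|^3_{L^{36/5}}+\|v_1\|^3_{L^{36/5}}\Big)+\|u_1'-v_1'\|_{L^4}\big(\|v_1\|_{L^{12}}+\|v_1\|^2_{L^8}\big),\end{align*} where all Lebesgue norms are over $\mathbb B^6_1$.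
   Context: Radial functions on $\mathbb B^6_1=\{x\in\mathbb R^6:|x|<1\}$ are identified with their profiles in $\rho=|x|$, and $'$ denotes $\partial_\rho$. $\mathcal H$ is the space of radial pairs in $H^2(\mathbb B^6_1)\times H^1(\mathbb B^6_1)$ with the standard norm. For a function $u$, $N(u)(\rho)=-\frac{3\sin(2\rho u(\rho))-6\rho u(\rho)}{2\rho^3}$; $\psi_{*1}(\rho)=\frac{2}{\rho}\arctan\frac{\rho}{\sqrt2}$; and \[\mathbf N(\mathbf u)(\rho)=\begin{pmatrix}0\\ N(\psi_{*1}+u_1)(\rho)-N(\psi_{*1})(\rho)-\frac{48}{(\rho^2+2)^2}u_1(\rho)\end{pmatrix}.\] *)

theory Defs
  imports "HOL-Analysis.Analysis"
begin

fun Dirs :: "'a::real_normed_vector list \<Rightarrow> ('a \<Rightarrow> real) \<Rightarrow> 'a \<Rightarrow> real" where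
  "Dirs [] f = f"
| "Dirs (e # es) f = (\<lambda>x. deriv (\<lambda>t. Dirs es f (x + t *\<^sub>R e)) 0)"

definition smooth_on :: "'a::real_normed_vector set \<Rightarrow> ('a \<Rightarrow> real) \<Rightarrow> bool" where
  "smooth_on S f \<longleftrightarrow> open S \<and>
     (\<forall>es. continuous_on S (Dirs es f) \<and>
       (\<forall>e. \<forall>x\<in>S. (\<lambda>t. Dirs es f (x + t *\<^sub>R e)) differentiable (at 0)))"

(* a profile u gives a function in C^\<infinity>(closed unit ball of R^6): x \<mapsto> u |x| is smooth
   on an open neighbourhood of the closed ball *)
definition smooth_radial :: "(real \<Rightarrow> real) \<Rightarrow> bool" where
  "smooth_radial u \<longleftrightarrow> (\<exists>S. cball (0::real^6) 1 \<subseteq> S \<and> smooth_on S (\<lambda>x. u (norm x)))"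

definition Lp :: "real \<Rightarrow> (real \<Rightarrow> real) \<Rightarrow> real" where
  "Lp p f = (LINT x : ball (0::real^6) 1 | lborel. \<bar>f (norm x)\<bar> powr p) powr (1 / p)"

(* H^1(B^6_1) norm squared of a radial function with profile g: |\<nabla>G| = |g'| *)
definition H1sq :: "(real \<Rightarrow> real) \<Rightarrow> real" where
  "H1sq g = (LINT x : ball (0::real^6) 1 | lborel.
      (g (norm x))^2 + (deriv g (norm x))^2)"

(* H^2(B^6_1) norm squared of a radial function with profile f:
   |D^2 F|^2 = f''^2 + 5 (f'/\<rho>)^2 in dimension 6 *)
definition H2sq :: "(real \<Rightarrow> real) \<Rightarrow> real" where
  "H2sq f = (LINT x : ball (0::real^6) 1 | lborel.
      (f (norm x))^2 + (deriv f (norm x))^2 + (deriv (deriv f) (norm x))^2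
      + 5 * (deriv f (norm x) / norm x)^2)"

definition Hnorm :: "(real \<Rightarrow> real) \<times> (real \<Rightarrow> real) \<Rightarrow> real" where
  "Hnorm w = sqrt (H2sq (fst w) + H1sq (snd w))"

definition pdiff :: "(real \<Rightarrow> real) \<times> (real \<Rightarrow> real) \<Rightarrow> (real \<Rightarrow> real) \<times> (real \<Rightarrow> real)
    \<Rightarrow> (real \<Rightarrow> real) \<times> (real \<Rightarrow> real)" where
  "pdiff w z = ((\<lambda>r. fst w r - fst z r), (\<lambda>r. snd w r - snd z r))"

definition Nf :: "(real \<Rightarrow> real) \<Rightarrow> real \<Rightarrow> real" where
  "Nf u \<rho> = - (3 * sin (2 * \<rho> * u \<rho>) - 6 * \<rho> * u \<rho>) / (2 * \<rho>^3)"

definition psi1 :: "real \<Rightarrow> real" where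
  "psi1 \<rho> = 2 / \<rho> * arctan (\<rho> / sqrt 2)"

definition Nvec :: "(real \<Rightarrow> real) \<times> (real \<Rightarrow> real) \<Rightarrow> (real \<Rightarrow> real) \<times> (real \<Rightarrow> real)" where
  "Nvec w = ((\<lambda>\<rho>. 0),
     (\<lambda>\<rho>. Nf (\<lambda>r. psi1 r + fst w r) \<rho> - Nf psi1 \<rho> - 48 / (\<rho>^2 + 2)^2 * fst w \<rho>))"

end

theory Submission
  imports Defs
begin

text \<open>
  Write \<open>\<psi> = \<psi>\<^sub>*\<^sub>1\<close> and \<open>x = u\<^sub>1(\<rho>)\<close>. Since \<open>2\<rho>\<psi>(\<rho>) = 4 arctan (\<rho>/\<surd>2)\<close>, the numbers
  \<open>sin(2\<rho>\<psi>) = \<rho> P(\<rho>)\<close> and \<open>cos(2\<rho>\<psi>) = Q(\<rho>)\<close> are bounded rational functions, and expanding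
  \<open>sin(2\<rho>(\<psi> + x))\<close> turns the nonlinearity into
  \<open>-3/2 (P(\<rho>) (cos(2\<rho>x) - 1)/\<rho>\<^sup>2 + Q(\<rho>) (sin(2\<rho>x) - 2\<rho>x)/\<rho>\<^sup>3)\<close>:
  the term linear in \<open>x\<close> cancels exactly against \<open>48/(\<rho>\<^sup>2+2)\<^sup>2 u\<^sub>1\<close>. Taylor remainder bounds for \<open>sin\<close>
  and \<open>cos\<close>, uniform in \<open>\<rho> \<in> (0,1]\<close>, dominate this expression, its \<open>\<rho>\<close>-derivative and their
  differences pointwise by sums of monomials in \<open>u\<^sub>1, u\<^sub>1'\<close> (and \<open>v\<^sub>1, v\<^sub>1'\<close>). The first component of
  the nonlinearity vanishes, so only an \<open>H\<^sup>1\<close> norm is to be estimated: square the pointwise bounds,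
  integrate over the ball and bound every monomial in \<open>L\<^sup>2\<close> by Hoelder's inequality.
\<close>

lemma abs_diff_le_if_deriv_bounded:
  fixes f f' :: "real \<Rightarrow> real"
  assumes "\<And>z. (f has_real_derivative f' z) (at z)"
    and "\<And>z. \<bar>z\<bar> \<le> T \<Longrightarrow> \<bar>f' z\<bar> \<le> B"
    and "\<bar>x\<bar> \<le> T" "\<bar>y\<bar> \<le> T"
  shows "\<bar>f x - f y\<bar> \<le> B * \<bar>x - y\<bar>"
proof -
  have "norm (f x - f y) \<le> B * norm (x - y)"
    by (rule field_differentiable_bound[of "{-T..T}"])
       (use assms in \<open>auto intro: has_field_derivative_at_within\<close>)
  thus ?thesis by simp
qed

lemma abs_cos_sub_one_le: "\<bar>cos t - 1\<bar> \<le> t^2" for t :: real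
proof -
  have "\<bar>(cos t - 1) - (cos 0 - 1)\<bar> \<le> \<bar>t\<bar> * \<bar>t - 0\<bar>"
    by (rule abs_diff_le_if_deriv_bounded[where f'="\<lambda>z. - sin z" and T="\<bar>t\<bar>"])
       (auto intro!: derivative_eq_intros intro: order_trans[OF abs_sin_x_le_abs_x])
  thus ?thesis by (simp add: power2_eq_square abs_mult)
qed

lemma abs_sin_sub_le: "\<bar>sin t - t\<bar> \<le> \<bar>t\<bar>^3" for t :: real
proof -
  have "\<bar>(sin t - t) - (sin 0 - 0)\<bar> \<le> t^2 * \<bar>t - 0\<bar>"
  proof (rule abs_diff_le_if_deriv_bounded[where f'="\<lambda>z. cos z - 1" and T="\<bar>t\<bar>"])
    fix z :: real assume "\<bar>z\<bar> \<le> \<bar>t\<bar>"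
    hence "z^2 \<le> t^2" by (metis abs_le_square_iff)
    thus "\<bar>cos z - 1\<bar> \<le> t^2" using abs_cos_sub_one_le[of z] by linarith
  qed (auto intro!: derivative_eq_intros)
  thus ?thesis by (simp add: power2_eq_square power3_eq_cube abs_mult)
qed

lemma abs_mult_cos_sub_sin_le: "\<bar>t * cos t - sin t\<bar> \<le> \<bar>t\<bar>^3" for t :: real
proof -
  have "\<bar>(t * cos t - sin t) - (0 * cos 0 - sin 0)\<bar> \<le> t^2 * \<bar>t - 0\<bar>"
  proof (rule abs_diff_le_if_deriv_bounded[where f'="\<lambda>z. - (z * sin z)" and T="\<bar>t\<bar>"])
    fix z :: real assume "\<bar>z\<bar> \<le> \<bar>t\<bar>"
    hence "\<bar>z * sin z\<bar> \<le> \<bar>t\<bar> * \<bar>t\<bar>" unfolding abs_mult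
      by (intro mult_mono abs_sin_x_le_abs_x[THEN order_trans]) auto
    thus "\<bar>- (z * sin z)\<bar> \<le> t^2" by (simp add: power2_eq_square)
  qed (auto intro!: derivative_eq_intros)
  thus ?thesis by (simp add: power2_eq_square power3_eq_cube abs_mult)
qed

lemma abs_mult_sin_add_cos_le_pow4: "\<bar>t * sin t + 2 * cos t - 2\<bar> \<le> t^4" for t :: real
proof -
  have "\<bar>(t * sin t + 2 * cos t - 2) - (0 * sin 0 + 2 * cos 0 - 2)\<bar> \<le> \<bar>t\<bar>^3 * \<bar>t - 0\<bar>"
  proof (rule abs_diff_le_if_deriv_bounded[where f'="\<lambda>z. z * cos z - sin z" and T="\<bar>t\<bar>"])
    fix z :: real assume "\<bar>z\<bar> \<le> \<bar>t\<bar>"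
    hence "\<bar>z\<bar>^3 \<le> \<bar>t\<bar>^3" by (simp add: power_mono)
    thus "\<bar>z * cos z - sin z\<bar> \<le> \<bar>t\<bar>^3" using abs_mult_cos_sub_sin_le[of z] by linarith
  qed (auto intro!: derivative_eq_intros)
  thus ?thesis by (simp add: power_mult_distrib power4_eq_xxxx power3_eq_cube abs_mult)
qed

lemma abs_mult_sin_add_cos_le_cube: "\<bar>t * sin t + 2 * cos t - 2\<bar> \<le> 5 * \<bar>t\<bar>^3" for t :: real
proof (cases "\<bar>t\<bar> \<le> 1")
  case True
  have "t^4 = \<bar>t\<bar>^3 * \<bar>t\<bar>" by (simp add: power4_eq_xxxx power3_eq_cube)
  also have "\<dots> \<le> \<bar>t\<bar>^3" using True by (intro mult_left_le) auto
  finally show ?thesis using abs_mult_sin_add_cos_le_pow4[of t] by simp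
next
  case False
  have "\<bar>t * sin t\<bar> \<le> \<bar>t\<bar>" unfolding abs_mult using abs_sin_le_one[of t] by (simp add: mult_left_le)
  hence "\<bar>t * sin t + 2 * cos t - 2\<bar> \<le> \<bar>t\<bar> + 4" using abs_cos_le_one[of t] by arith
  moreover have "\<bar>t\<bar> \<le> \<bar>t\<bar>^3" "1 \<le> \<bar>t\<bar>^3"
    using False power_increasing[of 1 3 "\<bar>t\<bar>"] one_le_power[of "\<bar>t\<bar>" 3] by auto
  ultimately show ?thesis by simp
qed

lemma abs_mult_cos_sub_sin_add_le_pow5: "\<bar>t * cos t - 3 * sin t + 2 * t\<bar> \<le> \<bar>t\<bar>^5" for t :: real
proof -
  have "\<bar>(t * cos t - 3 * sin t + 2 * t) - (0 * cos 0 - 3 * sin 0 + 2 * 0)\<bar> \<le> t^4 * \<bar>t - 0\<bar>"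
  proof (rule abs_diff_le_if_deriv_bounded[where f'="\<lambda>z. - (z * sin z + 2 * cos z - 2)" and T="\<bar>t\<bar>"])
    fix z :: real assume "\<bar>z\<bar> \<le> \<bar>t\<bar>"
    hence "\<bar>z\<bar>^4 \<le> \<bar>t\<bar>^4" by (intro power_mono) auto
    thus "\<bar>- (z * sin z + 2 * cos z - 2)\<bar> \<le> t^4"
      using abs_mult_sin_add_cos_le_pow4[of z] by (simp add: power_even_abs)
  qed (auto intro!: derivative_eq_intros simp: algebra_simps)
  moreover have "t^4 * \<bar>t\<bar> = \<bar>t\<bar>^5" by (cases "t \<ge> 0") (simp_all add: eval_nat_numeral)
  ultimately show ?thesis by simp
qed

lemma abs_mult_cos_sub_sin_add_le_pow4: "\<bar>t * cos t - 3 * sin t + 2 * t\<bar> \<le> 6 * t^4" for t :: real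
proof (cases "\<bar>t\<bar> \<le> 1")
  case True
  have "\<bar>t\<bar>^5 = t^4 * \<bar>t\<bar>" by (cases "t \<ge> 0") (simp_all add: eval_nat_numeral)
  also have "\<dots> \<le> t^4" using True by (intro mult_left_le) auto
  finally show ?thesis using abs_mult_cos_sub_sin_add_le_pow5[of t] by simp
next
  case False
  have "\<bar>t * cos t\<bar> \<le> \<bar>t\<bar>" unfolding abs_mult using abs_cos_le_one[of t] by (simp add: mult_left_le)
  hence "\<bar>t * cos t - 3 * sin t + 2 * t\<bar> \<le> 3 * \<bar>t\<bar> + 3" using abs_sin_le_one[of t] by arith
  moreover have "\<bar>t\<bar> \<le> \<bar>t\<bar>^4" "1 \<le> \<bar>t\<bar>^4"
    using False power_increasing[of 1 4 "\<bar>t\<bar>"] one_le_power[of "\<bar>t\<bar>" 4] by auto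
  ultimately show ?thesis by (simp add: power_even_abs)
qed

definition sinPsi :: "real \<Rightarrow> real" where "sinPsi r = 4 * sqrt 2 * (2 - r^2) / (2 + r^2)^2"
definition cosPsi :: "real \<Rightarrow> real" where "cosPsi r = (r^4 - 12 * r^2 + 4) / (2 + r^2)^2"
definition sinPsi' :: "real \<Rightarrow> real" where "sinPsi' r = -8 * sqrt 2 * r * (6 - r^2) / (2 + r^2)^3"
definition cosPsi' :: "real \<Rightarrow> real" where "cosPsi' r = -32 * r * (2 - r^2) / (2 + r^2)^3"

lemma has_real_derivative_sinPsi: "(sinPsi has_real_derivative sinPsi' r) (at r)"
proof -
  have "2 + r^2 \<noteq> 0" by (smt (verit) zero_le_power2)
  thus ?thesis unfolding sinPsi_def[abs_def] sinPsi'_def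
    by (auto intro!: derivative_eq_intros) (simp add: field_simps, algebra)
qed

lemma has_real_derivative_cosPsi: "(cosPsi has_real_derivative cosPsi' r) (at r)"
proof -
  have "2 + r^2 \<noteq> 0" by (smt (verit) zero_le_power2)
  thus ?thesis unfolding cosPsi_def[abs_def] cosPsi'_def
    by (auto intro!: derivative_eq_intros) (simp add: field_simps, algebra)
qed

lemma sin_cos_2r_psi1:
  fixes r :: real assumes "r \<noteq> 0"
  shows "sin (2 * r * psi1 r) = r * sinPsi r" "cos (2 * r * psi1 r) = cosPsi r"
proof -
  define t where "t = sqrt 2 * r / 2"
  have tt: "r / sqrt 2 = t" unfolding t_def by (simp add: field_simps)
  define \<theta> where "\<theta> = arctan t"
  have a: "2 * r * psi1 r = 2 * (2 * \<theta>)" using assms unfolding psi1_def \<theta>_def tt by simp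
  have pos: "1 + t^2 > 0" by (smt (verit) zero_le_power2)
  have s: "sin \<theta> = t / sqrt (1 + t^2)" and c: "cos \<theta> = 1 / sqrt (1 + t^2)"
    unfolding \<theta>_def by (simp_all add: sin_arctan cos_arctan)
  have sq: "sqrt (1 + t^2) ^2 = 1 + t^2" using pos by simp
  have t2: "t^2 = r^2 / 2" unfolding t_def by (simp add: power2_eq_square)
  have d: "2 + r^2 > 0" by (smt (verit) zero_le_power2)
  have s2: "sin (2 * \<theta>) = 2 * sqrt 2 * r / (2 + r^2)"
  proof -
    have "sin (2 * \<theta>) = 2 * t / (1 + t^2)" unfolding sin_double s c
      using sq pos by (simp add: field_simps power2_eq_square)
    thus ?thesis unfolding t2 using d by (simp add: field_simps t_def)
  qed
  have c2: "cos (2 * \<theta>) = (2 - r^2) / (2 + r^2)"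
  proof -
    have "cos (2 * \<theta>) = (1 - t^2) / (1 + t^2)" unfolding cos_double s c
      using sq pos by (simp add: field_simps power_divide)
    thus ?thesis unfolding t2 using d by (simp add: field_simps)
  qed
  show "sin (2 * r * psi1 r) = r * sinPsi r" unfolding a sin_double[of "2 * \<theta>"] s2 c2 sinPsi_def
    using d by (simp add: field_simps power2_eq_square)
  have "cos (2 * r * psi1 r) = (2 - r^2)^2 / (2 + r^2)^2 - (2 * sqrt 2 * r)^2 / (2 + r^2)^2"
    unfolding a cos_double[of "2 * \<theta>"] s2 c2 by (simp add: power_divide)
  also have "\<dots> = cosPsi r"
    unfolding cosPsi_def by (simp add: power_mult_distrib diff_divide_distrib[symmetric])
                            (simp add: power2_eq_square power4_eq_xxxx algebra_simps)
  finally show "cos (2 * r * psi1 r) = cosPsi r" .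
qed

lemma sinPsi_cosPsi_bounds:
  fixes r :: real assumes "0 \<le> r" "r \<le> 1"
  shows "\<bar>sinPsi r\<bar> \<le> 20" "\<bar>cosPsi r\<bar> \<le> 20" "\<bar>sinPsi' r\<bar> \<le> 20" "\<bar>cosPsi' r\<bar> \<le> 20"
proof -
  have r2: "r^2 \<le> 1" "0 \<le> r^2" "r^4 \<le> 1" "0 \<le> r^4" using assms by (auto simp: power_le_one)
  have D2: "4 \<le> (2 + r^2)^2" using power_mono[of 2 "2 + r^2" 2] r2 by simp
  have D3: "8 \<le> (2 + r^2)^3" using power_mono[of 2 "2 + r^2" 3] r2 by simp
  have s2: "sqrt 2 \<le> 2" by (smt (verit) real_sqrt_le_iff real_sqrt_four real_sqrt_le_mono)
  have frac: "\<bar>N / D\<bar> \<le> 20" if "\<bar>N\<bar> \<le> 20 * D" "0 < D" for N D :: real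
    using that by (simp add: abs_divide pos_divide_le_eq)
  have "\<bar>4 * sqrt 2 * (2 - r^2)\<bar> \<le> 4 * 2 * 2" unfolding abs_mult
    using r2 s2 by (intro mult_mono) auto
  thus "\<bar>sinPsi r\<bar> \<le> 20" unfolding sinPsi_def using D2 by (intro frac) (auto simp: add_pos_nonneg)
  have "\<bar>r^4 - 12 * r^2 + 4\<bar> \<le> 17" using r2 by arith
  thus "\<bar>cosPsi r\<bar> \<le> 20" unfolding cosPsi_def using D2 by (intro frac) (auto simp: add_pos_nonneg)
  have "\<bar>-8 * sqrt 2 * r * (6 - r^2)\<bar> \<le> 8 * 2 * 1 * 6" unfolding abs_mult
    using r2 s2 assms by (intro mult_mono) auto
  thus "\<bar>sinPsi' r\<bar> \<le> 20" unfolding sinPsi'_def using D3 by (intro frac) (auto simp: add_pos_nonneg)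
  have "\<bar>-32 * r * (2 - r^2)\<bar> \<le> 32 * 1 * 2" unfolding abs_mult
    using r2 assms by (intro mult_mono) auto
  thus "\<bar>cosPsi' r\<bar> \<le> 20" unfolding cosPsi'_def using D3 by (intro frac) (auto simp: add_pos_nonneg)
qed

text \<open>\<open>cosQ_x\<close>, \<open>sinQ_x\<close> and \<open>cosQ_r\<close>, \<open>sinQ_r\<close> are the partial derivatives of \<open>cosQ\<close>, \<open>sinQ\<close> in
  \<open>x\<close> and \<open>r\<close>, so that \<open>nl_deriv r (u r) (u' r)\<close> is the derivative of \<open>r \<mapsto> nl r (u r)\<close>.\<close>

definition cosQ :: "real \<Rightarrow> real \<Rightarrow> real" where "cosQ r x = (cos (2*r*x) - 1) / r^2"
definition sinQ :: "real \<Rightarrow> real \<Rightarrow> real" where "sinQ r x = (sin (2*r*x) - 2*r*x) / r^3"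
definition cosQ_x :: "real \<Rightarrow> real \<Rightarrow> real" where "cosQ_x r x = -2 * sin (2*r*x) / r"
definition sinQ_x :: "real \<Rightarrow> real \<Rightarrow> real" where "sinQ_x r x = 2 * (cos (2*r*x) - 1) / r^2"
definition cosQ_r :: "real \<Rightarrow> real \<Rightarrow> real" where
  "cosQ_r r x = -(2*r*x * sin (2*r*x) + 2 * cos (2*r*x) - 2) / r^3"
definition sinQ_r :: "real \<Rightarrow> real \<Rightarrow> real" where
  "sinQ_r r x = (2*r*x * cos (2*r*x) - 3 * sin (2*r*x) + 2 * (2*r*x)) / r^4"

definition nl :: "real \<Rightarrow> real \<Rightarrow> real" where
  "nl r x = -3/2 * (sinPsi r * cosQ r x + cosPsi r * sinQ r x)"

definition nl_deriv :: "real \<Rightarrow> real \<Rightarrow> real \<Rightarrow> real" where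
  "nl_deriv r x dx = -3/2 * (sinPsi' r * cosQ r x + sinPsi r * (cosQ_r r x + cosQ_x r x * dx)
                            + cosPsi' r * sinQ r x + cosPsi r * (sinQ_r r x + sinQ_x r x * dx))"

lemma snd_Nvec_eq:
  assumes r: "r \<noteq> 0"
  shows "snd (Nvec w) r = nl r (fst w r)"
proof -
  define x where "x = fst w r"
  have e: "sin (2 * r * (psi1 r + x)) = r * sinPsi r * cos (2*r*x) + cosPsi r * sin (2*r*x)"
    using sin_cos_2r_psi1[OF r] by (simp add: distrib_left sin_add)
  have q: "48 / (r^2 + 2)^2 = 3 * (1 - cosPsi r) / r^2"
  proof -
    have "2 + r^2 > 0" by (smt (verit) zero_le_power2)
    thus ?thesis unfolding cosPsi_def using r by (simp add: field_simps) (simp add: algebra_simps eval_nat_numeral)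
  qed
  have "snd (Nvec w) r = - (3 * sin (2 * r * (psi1 r + x)) - 6 * r * (psi1 r + x)) / (2 * r^3)
      + (3 * sin (2 * r * psi1 r) - 6 * r * psi1 r) / (2 * r^3) - 48 / (r^2 + 2)^2 * x"
    unfolding Nvec_def Nf_def x_def using r by (simp add: field_simps)
  also have "\<dots> = nl r x"
    unfolding e sin_cos_2r_psi1(1)[OF r] q nl_def cosQ_def sinQ_def
    using r by (simp add: field_simps) (simp add: algebra_simps eval_nat_numeral)
  finally show ?thesis unfolding x_def .
qed

lemma has_real_derivative_nl_comp:
  assumes r: "r \<noteq> 0" and du: "(u has_real_derivative du) (at r)"
  shows "((\<lambda>s. nl s (u s)) has_real_derivative nl_deriv r (u r) du) (at r)"
proof -
  have cosQ: "((\<lambda>s. cosQ s (u s)) has_real_derivative cosQ_r r (u r) + cosQ_x r (u r) * du) (at r)"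
    unfolding cosQ_def[abs_def]
    apply (rule derivative_eq_intros refl du | simp add: r)+
    unfolding cosQ_r_def cosQ_x_def using r by (simp add: field_simps) (simp add: algebra_simps eval_nat_numeral)
  have sinQ: "((\<lambda>s. sinQ s (u s)) has_real_derivative sinQ_r r (u r) + sinQ_x r (u r) * du) (at r)"
    unfolding sinQ_def[abs_def]
    apply (rule derivative_eq_intros refl du | simp add: r)+
    unfolding sinQ_r_def sinQ_x_def using r by (simp add: field_simps) (simp add: algebra_simps eval_nat_numeral)
  show ?thesis unfolding nl_def[abs_def]
    by (rule derivative_eq_intros refl has_real_derivative_sinPsi has_real_derivative_cosPsi cosQ sinQ)+
       (simp add: nl_deriv_def algebra_simps)
qed

lemma has_real_derivative_snd_Nvec:
  assumes "0 < r" and "(fst u has_real_derivative du) (at r)"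
  shows "(snd (Nvec u) has_real_derivative nl_deriv r (fst u r) du) (at r)"
proof -
  have "eventually (\<lambda>s. s \<in> {0<..}) (nhds r)" using assms(1) by (intro eventually_nhds_in_open) auto
  hence "eventually (\<lambda>s. snd (Nvec u) s = nl s (fst u s)) (nhds r)"
    by eventually_elim (simp add: snd_Nvec_eq)
  from DERIV_cong_ev[OF refl this refl] show ?thesis
    using has_real_derivative_nl_comp[OF _ assms(2)] assms(1) by simp
qed

lemma abs_mult_le_mult: "\<bar>a\<bar> \<le> A \<Longrightarrow> \<bar>b\<bar> \<le> B \<Longrightarrow> \<bar>a * b\<bar> \<le> A * B" for a b A B :: real
  unfolding abs_mult by (rule mult_mono) auto

lemma abs_add_le_add: "\<bar>a\<bar> \<le> A \<Longrightarrow> \<bar>b\<bar> \<le> B \<Longrightarrow> \<bar>a + b\<bar> \<le> A + B" for a b A B :: real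
  by arith

lemma abs_divide_pow_le:
  fixes r F c x :: real assumes r: "r > 0" and F: "\<bar>F\<bar> \<le> c * \<bar>2*r*x\<bar>^k"
  shows "\<bar>F / r^k\<bar> \<le> c * 2^k * \<bar>x\<bar>^k"
proof -
  have "\<bar>2*r*x\<bar>^k = 2^k * \<bar>x\<bar>^k * r^k" using r by (simp add: abs_mult power_mult_distrib)
  hence "\<bar>F\<bar> \<le> (c * 2^k * \<bar>x\<bar>^k) * r^k" using F by (simp add: algebra_simps)
  thus ?thesis using r by (simp add: abs_divide pos_divide_le_eq)
qed

lemma abs_add_pow_mult_abs_diff_le:
  fixes x y :: real
  shows "(\<bar>x\<bar> + \<bar>y\<bar>)^2 * \<bar>x-y\<bar> \<le> 2 * (\<bar>x-y\<bar> * x^2) + 2 * (\<bar>x-y\<bar> * y^2)"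
    and "(\<bar>x\<bar> + \<bar>y\<bar>)^3 * \<bar>x-y\<bar> \<le> 4 * (\<bar>x-y\<bar> * \<bar>x\<bar>^3) + 4 * (\<bar>x-y\<bar> * \<bar>y\<bar>^3)"
proof -
  have "2 * (\<bar>x\<bar>^2 + \<bar>y\<bar>^2) - (\<bar>x\<bar> + \<bar>y\<bar>)^2 = (\<bar>x\<bar> - \<bar>y\<bar>)^2"
    by (simp add: power2_eq_square algebra_simps)
  hence "(\<bar>x\<bar> + \<bar>y\<bar>)^2 \<le> 2 * (x^2 + y^2)" by (metis diff_ge_0_iff_ge power2_abs zero_le_power2)
  from mult_right_mono[OF this, of "\<bar>x-y\<bar>"]
  show "(\<bar>x\<bar> + \<bar>y\<bar>)^2 * \<bar>x-y\<bar> \<le> 2 * (\<bar>x-y\<bar> * x^2) + 2 * (\<bar>x-y\<bar> * y^2)"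
    by (simp add: algebra_simps)
  have "4 * (\<bar>x\<bar>^3 + \<bar>y\<bar>^3) - (\<bar>x\<bar> + \<bar>y\<bar>)^3 = 3 * (\<bar>x\<bar> + \<bar>y\<bar>) * (\<bar>x\<bar> - \<bar>y\<bar>)^2"
    by (simp add: power2_eq_square power3_eq_cube algebra_simps)
  also have "\<dots> \<ge> 0" by simp
  finally have "(\<bar>x\<bar> + \<bar>y\<bar>)^3 \<le> 4 * (\<bar>x\<bar>^3 + \<bar>y\<bar>^3)" by simp
  from mult_right_mono[OF this, of "\<bar>x-y\<bar>"]
  show "(\<bar>x\<bar> + \<bar>y\<bar>)^3 * \<bar>x-y\<bar> \<le> 4 * (\<bar>x-y\<bar> * \<bar>x\<bar>^3) + 4 * (\<bar>x-y\<bar> * \<bar>y\<bar>^3)"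
    by (simp add: algebra_simps)
qed

definition nl_majorant :: "real \<Rightarrow> real \<Rightarrow> real" where
  "nl_majorant x dx = x^2 + \<bar>x\<bar>^3 + x^4 + \<bar>x\<bar> * \<bar>dx\<bar> + x^2 * \<bar>dx\<bar>"

definition nl_diff_majorant :: "real \<Rightarrow> real \<Rightarrow> real \<Rightarrow> real \<Rightarrow> real" where
  "nl_diff_majorant x y dx dy = \<bar>x-y\<bar> * \<bar>x\<bar> + \<bar>x-y\<bar> * \<bar>y\<bar> + \<bar>x-y\<bar> * x^2 + \<bar>x-y\<bar> * y^2
     + \<bar>x-y\<bar> * \<bar>x\<bar>^3 + \<bar>x-y\<bar> * \<bar>y\<bar>^3 + \<bar>x-y\<bar> * \<bar>dx\<bar> + \<bar>x-y\<bar> * \<bar>dx\<bar> * \<bar>x\<bar> + \<bar>x-y\<bar> * \<bar>dx\<bar> * \<bar>y\<bar>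
     + \<bar>y\<bar> * \<bar>dx-dy\<bar> + y^2 * \<bar>dx-dy\<bar>"

lemma nl_majorant_nonneg: "0 \<le> nl_majorant x dx"
  unfolding nl_majorant_def by simp

lemma nl_diff_majorant_nonneg: "0 \<le> nl_diff_majorant x y dx dy"
  unfolding nl_diff_majorant_def by simp

lemma abs_diff_le_if_deriv_bounded_sum:
  assumes "\<And>z. (F has_real_derivative F' z) (at z)"
    and "\<And>z. \<bar>z\<bar> \<le> \<bar>x\<bar> + \<bar>y\<bar> \<Longrightarrow> \<bar>F' z\<bar> \<le> B"
  shows "\<bar>F x - F y\<bar> \<le> B * \<bar>x - y\<bar>"
  by (rule abs_diff_le_if_deriv_bounded[OF assms]) auto

context fixes r :: real assumes r0: "0 < r" and r1: "r \<le> 1"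
begin

lemmas coeff_bounds = sinPsi_cosPsi_bounds[of r, OF less_imp_le[OF r0] r1]

lemma abs_cosQ_le: "\<bar>cosQ r x\<bar> \<le> 4 * \<bar>x\<bar>^2"
  unfolding cosQ_def using abs_divide_pow_le[OF r0, of "cos (2*r*x) - 1" 1 x 2] abs_cos_sub_one_le[of "2*r*x"]
  by simp

lemma abs_sinQ_le: "\<bar>sinQ r x\<bar> \<le> 8 * \<bar>x\<bar>^3"
  unfolding sinQ_def using abs_divide_pow_le[OF r0, of "sin (2*r*x) - 2*r*x" 1 x 3] abs_sin_sub_le[of "2*r*x"]
  by simp

lemma abs_sin_divide_le: "\<bar>sin (2*r*x) / r\<bar> \<le> 2 * \<bar>x\<bar>"
  using abs_divide_pow_le[OF r0, of "sin (2*r*x)" 1 x 1] abs_sin_x_le_abs_x[of "2*r*x"] by simp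

lemma abs_cosQ_x_le: "\<bar>cosQ_x r x\<bar> \<le> 4 * \<bar>x\<bar>"
  using abs_sin_divide_le[of x] unfolding cosQ_x_def by (simp add: abs_divide abs_mult)

lemma abs_sinQ_x_le: "\<bar>sinQ_x r x\<bar> \<le> 8 * \<bar>x\<bar>^2"
proof -
  have "sinQ_x r x = 2 * cosQ r x" unfolding sinQ_x_def cosQ_def by simp
  thus ?thesis using abs_cosQ_le[of x] by simp
qed

lemma abs_cosQ_r_le: "\<bar>cosQ_r r x\<bar> \<le> 40 * \<bar>x\<bar>^3"
  unfolding cosQ_r_def abs_minus_cancel minus_divide_left[symmetric]
  using abs_divide_pow_le[OF r0 abs_mult_sin_add_cos_le_cube, of x] by simp

lemma abs_sinQ_r_le: "\<bar>sinQ_r r x\<bar> \<le> 96 * \<bar>x\<bar>^4"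
proof -
  have "\<bar>2*r*x * cos (2*r*x) - 3 * sin (2*r*x) + 2*(2*r*x)\<bar> \<le> 6 * \<bar>2*r*x\<bar>^4"
    using abs_mult_cos_sub_sin_add_le_pow4[of "2*r*x"] by (simp add: power_even_abs)
  from abs_divide_pow_le[OF r0 this] show ?thesis unfolding sinQ_r_def by simp
qed

lemma abs_cosQ_diff_le: "\<bar>cosQ r x - cosQ r y\<bar> \<le> 4 * (\<bar>x\<bar> + \<bar>y\<bar>) * \<bar>x - y\<bar>"
proof (rule abs_diff_le_if_deriv_bounded_sum)
  show "(cosQ r has_real_derivative cosQ_x r z) (at z)" for z
    unfolding cosQ_def cosQ_x_def using r0
    by (auto intro!: derivative_eq_intros simp: field_simps power2_eq_square)
  show "\<bar>cosQ_x r z\<bar> \<le> 4 * (\<bar>x\<bar> + \<bar>y\<bar>)" if "\<bar>z\<bar> \<le> \<bar>x\<bar> + \<bar>y\<bar>" for z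
    using abs_cosQ_x_le[of z] mult_left_mono[OF that, of 4] by linarith
qed

lemma abs_sinQ_diff_le: "\<bar>sinQ r x - sinQ r y\<bar> \<le> 8 * (\<bar>x\<bar> + \<bar>y\<bar>)^2 * \<bar>x - y\<bar>"
proof (rule abs_diff_le_if_deriv_bounded_sum)
  show "(sinQ r has_real_derivative sinQ_x r z) (at z)" for z
    unfolding sinQ_def sinQ_x_def using r0
    by (auto intro!: derivative_eq_intros simp: field_simps power2_eq_square power3_eq_cube)
  show "\<bar>sinQ_x r z\<bar> \<le> 8 * (\<bar>x\<bar> + \<bar>y\<bar>)^2" if "\<bar>z\<bar> \<le> \<bar>x\<bar> + \<bar>y\<bar>" for z
    using abs_sinQ_x_le[of z] power_mono[OF that, of 2] by simp
qed

lemma abs_cosQ_x_diff_le: "\<bar>cosQ_x r x - cosQ_x r y\<bar> \<le> 4 * \<bar>x - y\<bar>"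
proof (rule abs_diff_le_if_deriv_bounded_sum)
  show "(cosQ_x r has_real_derivative -4 * cos (2*r*z)) (at z)" for z
    unfolding cosQ_x_def using r0 by (auto intro!: derivative_eq_intros simp: field_simps)
qed (simp add: abs_mult)

lemma abs_sinQ_x_diff_le: "\<bar>sinQ_x r x - sinQ_x r y\<bar> \<le> 8 * (\<bar>x\<bar> + \<bar>y\<bar>) * \<bar>x - y\<bar>"
proof (rule abs_diff_le_if_deriv_bounded_sum)
  show "(sinQ_x r has_real_derivative -4 * (sin (2*r*z) / r)) (at z)" for z
    unfolding sinQ_x_def using r0 by (auto intro!: derivative_eq_intros simp: field_simps power2_eq_square)
  show "\<bar>-4 * (sin (2*r*z) / r)\<bar> \<le> 8 * (\<bar>x\<bar> + \<bar>y\<bar>)" if "\<bar>z\<bar> \<le> \<bar>x\<bar> + \<bar>y\<bar>" for z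
    using abs_sin_divide_le[of z] that by (simp add: abs_mult)
qed

lemma abs_cosQ_r_diff_le: "\<bar>cosQ_r r x - cosQ_r r y\<bar> \<le> 16 * (\<bar>x\<bar> + \<bar>y\<bar>)^3 * \<bar>x - y\<bar>"
proof (rule abs_diff_le_if_deriv_bounded_sum)
  show "(cosQ_r r has_real_derivative -2 * (2*r*z * cos (2*r*z) - sin (2*r*z)) / r^2) (at z)" for z
    unfolding cosQ_r_def using r0
    by (auto intro!: derivative_eq_intros simp: field_simps) (simp add: algebra_simps eval_nat_numeral)
  fix z assume z: "\<bar>z\<bar> \<le> \<bar>x\<bar> + \<bar>y\<bar>"
  define F where "F = 2*r*z * cos (2*r*z) - sin (2*r*z)"
  have b: "\<bar>2*r*z\<bar> \<le> 2 * \<bar>z\<bar>" using r0 r1 mult_left_le_one_le[of "\<bar>z\<bar>" r] by (simp add: abs_mult)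
  have "\<bar>F\<bar> \<le> \<bar>2*r*z\<bar>^3" unfolding F_def by (rule abs_mult_cos_sub_sin_le)
  also have "\<dots> = \<bar>2*r*z\<bar> * \<bar>2*r*z\<bar>^2" by (simp add: power3_eq_cube power2_eq_square)
  also have "\<dots> \<le> (2 * \<bar>z\<bar>) * \<bar>2*r*z\<bar>^2" by (rule mult_right_mono[OF b]) simp
  finally have "\<bar>F / r^2\<bar> \<le> (2 * \<bar>z\<bar>) * 2^2 * \<bar>z\<bar>^2" by (rule abs_divide_pow_le[OF r0])
  hence "\<bar>-2 * F / r^2\<bar> \<le> 16 * \<bar>z\<bar>^3" by (simp add: abs_divide abs_mult power2_eq_square power3_eq_cube)
  moreover have "\<bar>z\<bar>^3 \<le> (\<bar>x\<bar> + \<bar>y\<bar>)^3" using z by (intro power_mono) auto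
  ultimately show "\<bar>-2 * (2*r*z * cos (2*r*z) - sin (2*r*z)) / r^2\<bar> \<le> 16 * (\<bar>x\<bar> + \<bar>y\<bar>)^3"
    unfolding F_def by linarith
qed

lemma abs_sinQ_r_diff_le: "\<bar>sinQ_r r x - sinQ_r r y\<bar> \<le> 80 * (\<bar>x\<bar> + \<bar>y\<bar>)^3 * \<bar>x - y\<bar>"
proof (rule abs_diff_le_if_deriv_bounded_sum)
  show "(sinQ_r r has_real_derivative -2 * (2*r*z * sin (2*r*z) + 2 * cos (2*r*z) - 2) / r^3) (at z)" for z
    unfolding sinQ_r_def using r0
    by (auto intro!: derivative_eq_intros simp: field_simps) (simp add: algebra_simps eval_nat_numeral)
  fix z assume z: "\<bar>z\<bar> \<le> \<bar>x\<bar> + \<bar>y\<bar>"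
  define F where "F = 2*r*z * sin (2*r*z) + 2 * cos (2*r*z) - 2"
  have "\<bar>F / r^3\<bar> \<le> 5 * 2^3 * \<bar>z\<bar>^3" unfolding F_def by (rule abs_divide_pow_le[OF r0 abs_mult_sin_add_cos_le_cube])
  hence "\<bar>-2 * F / r^3\<bar> \<le> 80 * \<bar>z\<bar>^3" by (simp add: abs_divide abs_mult)
  moreover have "\<bar>z\<bar>^3 \<le> (\<bar>x\<bar> + \<bar>y\<bar>)^3" using z by (intro power_mono) auto
  ultimately show "\<bar>-2 * (2*r*z * sin (2*r*z) + 2 * cos (2*r*z) - 2) / r^3\<bar> \<le> 80 * (\<bar>x\<bar> + \<bar>y\<bar>)^3"
    unfolding F_def by linarith
qed

lemma abs_nl_le: "\<bar>nl r x\<bar> \<le> 240 * nl_majorant x dx"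
proof -
  define S where "S = sinPsi r * cosQ r x + cosPsi r * sinQ r x"
  have "\<bar>S\<bar> \<le> 20 * (4 * \<bar>x\<bar>^2) + 20 * (8 * \<bar>x\<bar>^3)" unfolding S_def
    by (intro abs_add_le_add abs_mult_le_mult coeff_bounds abs_cosQ_le abs_sinQ_le)
  hence "\<bar>S\<bar> \<le> 80 * x^2 + 160 * \<bar>x\<bar>^3" by simp
  moreover have "\<bar>nl r x\<bar> = 3/2 * \<bar>S\<bar>"
  proof -
    have "nl r x = -3/2 * S" unfolding nl_def S_def ..
    thus ?thesis by (simp add: abs_mult)
  qed
  moreover have "0 \<le> x^2" "0 \<le> \<bar>x\<bar>^3" "0 \<le> x^4" "0 \<le> \<bar>x\<bar> * \<bar>dx\<bar>" "0 \<le> x^2 * \<bar>dx\<bar>"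
    by simp_all
  ultimately show ?thesis unfolding nl_majorant_def distrib_left by linarith
qed

lemma abs_nl_deriv_le: "\<bar>nl_deriv r x dx\<bar> \<le> 3000 * nl_majorant x dx"
proof -
  define S where "S = sinPsi' r * cosQ r x + sinPsi r * cosQ_r r x + sinPsi r * (cosQ_x r x * dx)
          + cosPsi' r * sinQ r x + cosPsi r * sinQ_r r x + cosPsi r * (sinQ_x r x * dx)"
  have "\<bar>S\<bar> \<le> 20 * (4 * \<bar>x\<bar>^2) + 20 * (40 * \<bar>x\<bar>^3) + 20 * ((4 * \<bar>x\<bar>) * \<bar>dx\<bar>)
          + 20 * (8 * \<bar>x\<bar>^3) + 20 * (96 * \<bar>x\<bar>^4) + 20 * ((8 * \<bar>x\<bar>^2) * \<bar>dx\<bar>)"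
    unfolding S_def
    by (intro abs_add_le_add abs_mult_le_mult coeff_bounds order_refl
        abs_cosQ_le abs_sinQ_le abs_cosQ_r_le abs_sinQ_r_le
        abs_cosQ_x_le abs_sinQ_x_le)
  hence "\<bar>S\<bar> \<le> 80 * x^2 + 960 * \<bar>x\<bar>^3 + 80 * (\<bar>x\<bar> * \<bar>dx\<bar>) + 1920 * x^4 + 160 * (x^2 * \<bar>dx\<bar>)"
    by (simp add: algebra_simps)
  moreover have "\<bar>nl_deriv r x dx\<bar> = 3/2 * \<bar>S\<bar>"
  proof -
    have "nl_deriv r x dx = -3/2 * S" unfolding nl_deriv_def S_def by (simp add: algebra_simps)
    thus ?thesis by (simp add: abs_mult)
  qed
  moreover have "0 \<le> x^2" "0 \<le> \<bar>x\<bar>^3" "0 \<le> x^4" "0 \<le> \<bar>x\<bar> * \<bar>dx\<bar>" "0 \<le> x^2 * \<bar>dx\<bar>"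
    by simp_all
  ultimately show ?thesis unfolding nl_majorant_def distrib_left by linarith
qed

lemma abs_nl_diff_le: "\<bar>nl r x - nl r y\<bar> \<le> 2000 * nl_diff_majorant x y dx dy"
proof -
  define S where "S = sinPsi r * (cosQ r x - cosQ r y) + cosPsi r * (sinQ r x - sinQ r y)"
  have "\<bar>S\<bar> \<le> 20 * (4 * (\<bar>x\<bar> + \<bar>y\<bar>) * \<bar>x - y\<bar>) + 20 * (8 * (\<bar>x\<bar> + \<bar>y\<bar>)^2 * \<bar>x - y\<bar>)"
    unfolding S_def
    by (intro abs_add_le_add abs_mult_le_mult coeff_bounds abs_cosQ_diff_le abs_sinQ_diff_le)
  hence "\<bar>S\<bar> \<le> 80 * (\<bar>x-y\<bar> * \<bar>x\<bar> + \<bar>x-y\<bar> * \<bar>y\<bar>) + 160 * ((\<bar>x\<bar> + \<bar>y\<bar>)^2 * \<bar>x - y\<bar>)"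
    by (simp add: algebra_simps)
  moreover have "\<bar>nl r x - nl r y\<bar> = 3/2 * \<bar>S\<bar>"
  proof -
    have "nl r x - nl r y = -3/2 * S" unfolding nl_def S_def by (simp add: algebra_simps)
    thus ?thesis by (simp add: abs_mult)
  qed
  moreover note abs_add_pow_mult_abs_diff_le(1)[of x y]
  moreover have "0 \<le> \<bar>x-y\<bar> * \<bar>x\<bar>^3" "0 \<le> \<bar>x-y\<bar> * \<bar>y\<bar>^3" "0 \<le> \<bar>x-y\<bar> * \<bar>dx\<bar>"
    "0 \<le> \<bar>x-y\<bar> * \<bar>dx\<bar> * \<bar>x\<bar>" "0 \<le> \<bar>x-y\<bar> * \<bar>dx\<bar> * \<bar>y\<bar>" "0 \<le> \<bar>y\<bar> * \<bar>dx-dy\<bar>"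
    "0 \<le> y^2 * \<bar>dx-dy\<bar>" "0 \<le> \<bar>x-y\<bar> * \<bar>x\<bar>" "0 \<le> \<bar>x-y\<bar> * \<bar>y\<bar>"
    "0 \<le> \<bar>x-y\<bar> * x^2" "0 \<le> \<bar>x-y\<bar> * y^2"
    by simp_all
  ultimately show ?thesis unfolding nl_diff_majorant_def distrib_left by linarith
qed

lemma abs_nl_deriv_diff_le: "\<bar>nl_deriv r x dx - nl_deriv r y dy\<bar> \<le> 20000 * nl_diff_majorant x y dx dy"
proof -
  define S where "S = sinPsi' r * (cosQ r x - cosQ r y) + sinPsi r * (cosQ_r r x - cosQ_r r y)
      + sinPsi r * ((cosQ_x r x - cosQ_x r y) * dx + cosQ_x r y * (dx - dy))
      + cosPsi' r * (sinQ r x - sinQ r y) + cosPsi r * (sinQ_r r x - sinQ_r r y)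
      + cosPsi r * ((sinQ_x r x - sinQ_x r y) * dx + sinQ_x r y * (dx - dy))"
  have "\<bar>S\<bar> \<le> 20 * (4 * (\<bar>x\<bar> + \<bar>y\<bar>) * \<bar>x - y\<bar>) + 20 * (16 * (\<bar>x\<bar> + \<bar>y\<bar>)^3 * \<bar>x - y\<bar>)
      + 20 * ((4 * \<bar>x - y\<bar>) * \<bar>dx\<bar> + (4 * \<bar>y\<bar>) * \<bar>dx-dy\<bar>) + 20 * (8 * (\<bar>x\<bar> + \<bar>y\<bar>)^2 * \<bar>x - y\<bar>)
      + 20 * (80 * (\<bar>x\<bar> + \<bar>y\<bar>)^3 * \<bar>x - y\<bar>)
      + 20 * ((8 * (\<bar>x\<bar> + \<bar>y\<bar>) * \<bar>x - y\<bar>) * \<bar>dx\<bar> + (8 * \<bar>y\<bar>^2) * \<bar>dx-dy\<bar>)"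
    unfolding S_def
    by (intro abs_add_le_add abs_mult_le_mult coeff_bounds order_refl
        abs_cosQ_diff_le abs_sinQ_diff_le abs_cosQ_r_diff_le
        abs_sinQ_r_diff_le abs_cosQ_x_diff_le abs_sinQ_x_diff_le
        abs_cosQ_x_le abs_sinQ_x_le)
  hence "\<bar>S\<bar> \<le> 80 * (\<bar>x-y\<bar> * \<bar>x\<bar> + \<bar>x-y\<bar> * \<bar>y\<bar>) + 1920 * ((\<bar>x\<bar> + \<bar>y\<bar>)^3 * \<bar>x - y\<bar>)
      + 80 * (\<bar>x-y\<bar> * \<bar>dx\<bar>) + 80 * (\<bar>y\<bar> * \<bar>dx-dy\<bar>) + 160 * ((\<bar>x\<bar> + \<bar>y\<bar>)^2 * \<bar>x - y\<bar>)
      + 160 * (\<bar>x-y\<bar> * \<bar>dx\<bar> * \<bar>x\<bar>) + 160 * (\<bar>x-y\<bar> * \<bar>dx\<bar> * \<bar>y\<bar>) + 160 * (y^2 * \<bar>dx-dy\<bar>)"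
    by (simp add: algebra_simps)
  moreover have "\<bar>nl_deriv r x dx - nl_deriv r y dy\<bar> = 3/2 * \<bar>S\<bar>"
  proof -
    have "nl_deriv r x dx - nl_deriv r y dy = -3/2 * S" unfolding nl_deriv_def S_def by (simp add: algebra_simps)
    thus ?thesis by (simp add: abs_mult)
  qed
  moreover note abs_add_pow_mult_abs_diff_le[of x y]
  moreover have "0 \<le> \<bar>x-y\<bar> * \<bar>x\<bar>^3" "0 \<le> \<bar>x-y\<bar> * \<bar>y\<bar>^3" "0 \<le> \<bar>x-y\<bar> * \<bar>dx\<bar>"
    "0 \<le> \<bar>x-y\<bar> * \<bar>dx\<bar> * \<bar>x\<bar>" "0 \<le> \<bar>x-y\<bar> * \<bar>dx\<bar> * \<bar>y\<bar>" "0 \<le> \<bar>y\<bar> * \<bar>dx-dy\<bar>"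
    "0 \<le> y^2 * \<bar>dx-dy\<bar>" "0 \<le> \<bar>x-y\<bar> * \<bar>x\<bar>" "0 \<le> \<bar>x-y\<bar> * \<bar>y\<bar>"
    "0 \<le> \<bar>x-y\<bar> * x^2" "0 \<le> \<bar>x-y\<bar> * y^2"
    by simp_all
  ultimately show ?thesis unfolding nl_diff_majorant_def distrib_left by linarith
qed

end

definition ball6 :: "(real^6) measure" where "ball6 = restrict_space lborel (ball 0 1)"

lemma sets_ball6: "ball (0::real^6) 1 \<inter> space lborel \<in> sets lborel" by simp

lemma space_ball6: "space ball6 = ball 0 1" unfolding ball6_def by (simp add: space_restrict_space)

lemma finite_measure_ball6: "finite_measure ball6"
proof
  have "emeasure ball6 (space ball6) = emeasure lborel (ball (0::real^6) 1)"
    unfolding ball6_def by (subst emeasure_restrict_space) (auto simp: space_restrict_space)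
  also have "\<dots> < \<infinity>" by (rule emeasure_bounded_finite) simp
  finally show "emeasure ball6 (space ball6) \<noteq> \<infinity>" by simp
qed

lemma AE_ball6_nonzero: "AE x in ball6. 0 < norm x \<and> norm x < 1"
proof -
  have "AE x in lborel. x \<in> ball (0::real^6) 1 \<longrightarrow> x \<noteq> 0"
    using AE_lborel_singleton[of "0::real^6"] by eventually_elim auto
  hence "AE x in ball6. x \<noteq> 0" unfolding ball6_def by (subst AE_restrict_space_iff[OF sets_ball6])
  moreover have "AE x in ball6. x \<in> ball 0 1" using AE_space[of ball6] by (simp add: space_ball6)
  ultimately show ?thesis by eventually_elim auto
qed

lemma borel_measurable_ball6_if_continuous:
  "continuous_on (ball (0::real^6) 1) F \<Longrightarrow> F \<in> borel_measurable ball6"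
proof -
  assume "continuous_on (ball (0::real^6) 1) F"
  hence "F \<in> borel_measurable (restrict_space borel (ball (0::real^6) 1))"
    by (rule borel_measurable_continuous_on_restrict)
  moreover have "sets (restrict_space lborel (ball (0::real^6) 1)) = sets (restrict_space borel (ball 0 1))"
    by (rule sets_restrict_space_cong) simp
  ultimately show ?thesis unfolding ball6_def using measurable_cong_sets[OF _ refl, of _ _ borel] by simp
qed

text \<open>Boundedness puts a profile into every \<open>L\<^sup>p\<close> of the ball, so Hoelder's inequality applies
  without integrability side conditions.\<close>

definition bounded_profile :: "(real \<Rightarrow> real) \<Rightarrow> bool" where
  "bounded_profile \<phi> \<longleftrightarrow> (\<lambda>x. \<phi> (norm x)) \<in> borel_measurable ball6 \<and>
     (\<exists>C. \<forall>x\<in>ball (0::real^6) 1. \<bar>\<phi> (norm x)\<bar> \<le> C)"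

definition ball_integral :: "(real \<Rightarrow> real) \<Rightarrow> real" where
  "ball_integral \<phi> = integral\<^sup>L ball6 (\<lambda>x. \<phi> (norm x))"

lemma integrable_bounded_profile: "bounded_profile \<phi> \<Longrightarrow> integrable ball6 (\<lambda>x. \<phi> (norm x))"
  unfolding bounded_profile_def
  by (elim conjE exE, rule finite_measure.integrable_const_bound[OF finite_measure_ball6])
     (auto simp: space_ball6 intro!: AE_I2)

lemma bounded_profile_const: "bounded_profile (\<lambda>r. c)"
  unfolding bounded_profile_def by (intro conjI exI[of _ "\<bar>c\<bar>"] ballI order_refl borel_measurable_const)

lemma bounded_profile_add: "bounded_profile f \<Longrightarrow> bounded_profile g \<Longrightarrow> bounded_profile (\<lambda>r. f r + g r)"
  unfolding bounded_profile_def
proof (elim conjE exE, intro conjI)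
  fix C D assume "\<forall>x\<in>ball (0::real^6) 1. \<bar>f (norm x)\<bar> \<le> C" "\<forall>x\<in>ball (0::real^6) 1. \<bar>g (norm x)\<bar> \<le> D"
  thus "\<exists>C. \<forall>x\<in>ball (0::real^6) 1. \<bar>f (norm x) + g (norm x)\<bar> \<le> C"
    by (intro exI[of _ "C + D"]) (auto intro: abs_triangle_ineq[THEN order_trans] add_mono)
qed measurable

lemma bounded_profile_diff: "bounded_profile f \<Longrightarrow> bounded_profile g \<Longrightarrow> bounded_profile (\<lambda>r. f r - g r)"
  unfolding bounded_profile_def
proof (elim conjE exE, intro conjI)
  fix C D assume "\<forall>x\<in>ball (0::real^6) 1. \<bar>f (norm x)\<bar> \<le> C" "\<forall>x\<in>ball (0::real^6) 1. \<bar>g (norm x)\<bar> \<le> D"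
  thus "\<exists>C. \<forall>x\<in>ball (0::real^6) 1. \<bar>f (norm x) - g (norm x)\<bar> \<le> C"
    by (intro exI[of _ "C + D"]) (auto intro: abs_triangle_ineq4[THEN order_trans] add_mono)
qed measurable

lemma bounded_profile_mult: "bounded_profile f \<Longrightarrow> bounded_profile g \<Longrightarrow> bounded_profile (\<lambda>r. f r * g r)"
  unfolding bounded_profile_def
proof (elim conjE exE, intro conjI)
  fix C D assume "\<forall>x\<in>ball (0::real^6) 1. \<bar>f (norm x)\<bar> \<le> C" "\<forall>x\<in>ball (0::real^6) 1. \<bar>g (norm x)\<bar> \<le> D"
  thus "\<exists>C. \<forall>x\<in>ball (0::real^6) 1. \<bar>f (norm x) * g (norm x)\<bar> \<le> C"
    by (intro exI[of _ "C * D"]) (auto simp: abs_mult intro!: mult_mono)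
qed measurable

lemma bounded_profile_power: "bounded_profile f \<Longrightarrow> bounded_profile (\<lambda>r. f r ^ n)"
  by (induction n) (auto intro: bounded_profile_mult bounded_profile_const)

lemma bounded_profile_abs_powr: "bounded_profile f \<Longrightarrow> 0 \<le> p \<Longrightarrow> bounded_profile (\<lambda>r. \<bar>f r\<bar> powr p)"
  unfolding bounded_profile_def
proof (elim conjE exE, intro conjI)
  fix C assume "\<forall>x\<in>ball (0::real^6) 1. \<bar>f (norm x)\<bar> \<le> C" "0 \<le> p"
  thus "\<exists>C. \<forall>x\<in>ball (0::real^6) 1. \<bar>\<bar>f (norm x)\<bar> powr p\<bar> \<le> C"
    by (intro exI[of _ "C powr p"]) (auto intro!: powr_mono2)
qed measurable

lemma Lp_ball6: "Lp p f = (integral\<^sup>L ball6 (\<lambda>x. \<bar>f (norm x)\<bar> powr p)) powr (1/p)"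
  unfolding Lp_def set_lebesgue_integral_def ball6_def
  by (subst integral_restrict_space[OF sets_ball6]) simp

lemma H1sq_ball6: "H1sq g = integral\<^sup>L ball6 (\<lambda>x. (g (norm x))^2 + (deriv g (norm x))^2)"
  unfolding H1sq_def set_lebesgue_integral_def ball6_def
  by (subst integral_restrict_space[OF sets_ball6]) simp

lemma Lp_nonneg: "0 \<le> Lp p f" unfolding Lp_def by simp

lemma Lp_power:
  assumes p: "0 < p" and n: "1 \<le> n"
  shows "Lp p (\<lambda>r. f r ^ n) = Lp (real n * p) f ^ n"
proof -
  have e: "\<bar>f r ^ n\<bar> powr p = \<bar>f r\<bar> powr (real n * p)" for r
  proof (cases "f r = 0")
    case True thus ?thesis using n p by simp
  next
    case False
    hence "\<bar>f r ^ n\<bar> = \<bar>f r\<bar> powr real n" by (simp add: power_abs powr_realpow)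
    thus ?thesis by (simp add: powr_powr)
  qed
  define I where "I = integral\<^sup>L ball6 (\<lambda>x. \<bar>f (norm x)\<bar> powr (real n * p))"
  have I0: "0 \<le> I" unfolding I_def by (rule integral_nonneg_AE) auto
  have "Lp p (\<lambda>r. f r ^ n) = (I powr (1 / (real n * p))) powr real n"
    unfolding Lp_ball6 e I_def[symmetric] using n p by (simp add: powr_powr)
  also have "\<dots> = (I powr (1 / (real n * p))) ^ n"
    using n I0 by (intro powr_realpow') auto
  finally show ?thesis unfolding Lp_ball6 I_def .
qed

lemma ball_integral_square: "ball_integral (\<lambda>r. (f r)^2) = Lp 2 f ^ 2"
proof -
  have "0 \<le> ball_integral (\<lambda>r. (f r)^2)" unfolding ball_integral_def by (rule integral_nonneg_AE) simp
  moreover have "\<bar>y\<bar> powr 2 = y^2" for y :: real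
    by (cases "y = 0") (simp_all add: powr_realpow)
  ultimately show ?thesis
    unfolding Lp_ball6 ball_integral_def by (simp add: powr_powr powr_realpow'[symmetric])
qed

lemma holder_inequality_normalized:
  fixes f g :: "'a \<Rightarrow> real" and p q :: real
  assumes pq: "p > 1" "q > 1" "1/p + 1/q = 1"
    and fi: "integrable M (\<lambda>x. \<bar>f x\<bar> powr p)" and gi: "integrable M (\<lambda>x. \<bar>g x\<bar> powr q)"
    and fgi: "integrable M (\<lambda>x. f x * g x)"
    and ab: "\<alpha> > 0" "\<beta> > 0"
    and A: "integral\<^sup>L M (\<lambda>x. \<bar>f x\<bar> powr p) \<le> \<alpha> powr p"
    and B: "integral\<^sup>L M (\<lambda>x. \<bar>g x\<bar> powr q) \<le> \<beta> powr q"
  shows "integral\<^sup>L M (\<lambda>x. \<bar>f x * g x\<bar>) \<le> \<alpha> * \<beta>"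
proof -
  have "\<bar>f x * g x\<bar> / (\<alpha> * \<beta>) \<le> \<bar>f x\<bar> powr p / (p * \<alpha> powr p) + \<bar>g x\<bar> powr q / (q * \<beta> powr q)" for x
  proof -
    have "(\<bar>f x\<bar> / \<alpha>) * (\<bar>g x\<bar> / \<beta>) \<le> (\<bar>f x\<bar> / \<alpha>) powr p / p + (\<bar>g x\<bar> / \<beta>) powr q / q"
      by (rule Youngs_inequality) (use pq ab in auto)
    thus ?thesis using ab by (simp add: powr_divide abs_mult mult.commute)
  qed
  hence "integral\<^sup>L M (\<lambda>x. \<bar>f x * g x\<bar> / (\<alpha> * \<beta>)) \<le>
      integral\<^sup>L M (\<lambda>x. \<bar>f x\<bar> powr p / (p * \<alpha> powr p) + \<bar>g x\<bar> powr q / (q * \<beta> powr q))"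
    using fi gi fgi by (intro integral_mono) auto
  also have "\<dots> = integral\<^sup>L M (\<lambda>x. \<bar>f x\<bar> powr p) / (p * \<alpha> powr p)
      + integral\<^sup>L M (\<lambda>x. \<bar>g x\<bar> powr q) / (q * \<beta> powr q)"
    using fi gi by simp
  also have "\<dots> \<le> 1/p + 1/q"
    using A B ab pq by (intro add_mono) (simp_all add: divide_le_eq)
  finally show ?thesis using pq ab by (simp add: pos_divide_le_eq)
qed

lemma holder_inequality:
  fixes f g :: "'a \<Rightarrow> real" and p q :: real
  assumes pq: "p > 1" "q > 1" "1/p + 1/q = 1"
    and fi: "integrable M (\<lambda>x. \<bar>f x\<bar> powr p)" and gi: "integrable M (\<lambda>x. \<bar>g x\<bar> powr q)"
    and fgi: "integrable M (\<lambda>x. f x * g x)"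
  shows "integral\<^sup>L M (\<lambda>x. \<bar>f x * g x\<bar>) \<le>
     (integral\<^sup>L M (\<lambda>x. \<bar>f x\<bar> powr p)) powr (1/p) * (integral\<^sup>L M (\<lambda>x. \<bar>g x\<bar> powr q)) powr (1/q)"
proof -
  define A where "A = integral\<^sup>L M (\<lambda>x. \<bar>f x\<bar> powr p)"
  define B where "B = integral\<^sup>L M (\<lambda>x. \<bar>g x\<bar> powr q)"
  have A0: "A \<ge> 0" and B0: "B \<ge> 0" unfolding A_def B_def by (auto intro: integral_nonneg_AE)
  have "integral\<^sup>L M (\<lambda>x. \<bar>f x * g x\<bar>) \<le> (A+e) powr (1/p) * (B+e) powr (1/q)" if "e > 0" for e
    using that A0 B0 pq
    by (intro holder_inequality_normalized[OF pq fi gi fgi]) (simp_all add: powr_powr flip: A_def B_def)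
  moreover have "((\<lambda>e. (A+e) powr (1/p) * (B+e) powr (1/q)) \<longlongrightarrow> (A+0) powr (1/p) * (B+0) powr (1/q)) (at_right 0)"
    using pq A0 B0
    by (intro tendsto_intros tendsto_powr') (auto intro!: eventually_at_rightI[of 0 1])
  ultimately have "integral\<^sup>L M (\<lambda>x. \<bar>f x * g x\<bar>) \<le> (A+0) powr (1/p) * (B+0) powr (1/q)"
    by (intro tendsto_lowerbound) (auto intro!: eventually_at_rightI[of 0 1])
  thus ?thesis unfolding A_def B_def by simp
qed

lemma Lp_mult_le:
  assumes p: "0 < p" and st: "1 < s" "1 < t" "1/s + 1/t = 1"
    and f: "bounded_profile f" and g: "bounded_profile g"
  shows "Lp p (\<lambda>r. f r * g r) \<le> Lp (p * s) f * Lp (p * t) g"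
proof -
  define F where "F = (\<lambda>r. \<bar>f r\<bar> powr p)"
  define G where "G = (\<lambda>r. \<bar>g r\<bar> powr p)"
  have F: "bounded_profile F" and G: "bounded_profile G"
    unfolding F_def G_def using bounded_profile_abs_powr f g p by auto
  have "integral\<^sup>L ball6 (\<lambda>x. \<bar>F (norm x) * G (norm x)\<bar>) \<le>
     (integral\<^sup>L ball6 (\<lambda>x. \<bar>F (norm x)\<bar> powr s)) powr (1/s) *
     (integral\<^sup>L ball6 (\<lambda>x. \<bar>G (norm x)\<bar> powr t)) powr (1/t)"
    using st F G
    by (intro holder_inequality integrable_bounded_profile bounded_profile_abs_powr bounded_profile_mult) auto
  moreover have "\<bar>F y * G y\<bar> = \<bar>f y * g y\<bar> powr p" "\<bar>F y\<bar> powr s = \<bar>f y\<bar> powr (p * s)"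
    "\<bar>G y\<bar> powr t = \<bar>g y\<bar> powr (p * t)" for y
    unfolding F_def G_def by (simp_all add: abs_mult powr_mult powr_powr)
  ultimately have "integral\<^sup>L ball6 (\<lambda>x. \<bar>f (norm x) * g (norm x)\<bar> powr p) \<le>
     Lp (p * s) f powr p * Lp (p * t) g powr p"
    unfolding Lp_ball6 using p by (simp add: powr_powr)
  hence "Lp p (\<lambda>r. f r * g r) \<le> (Lp (p * s) f powr p * Lp (p * t) g powr p) powr (1/p)"
    unfolding Lp_ball6 using p by (intro powr_mono2) (auto intro: integral_nonneg_AE)
  also have "\<dots> = Lp (p * s) f * Lp (p * t) g"
    using p by (simp add: powr_mult[symmetric] powr_powr Lp_nonneg)
  finally show ?thesis .
qed

lemma Lp_le_Lp_mult_const: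
  assumes "bounded_profile f" "0 < p" "1 < s" "1 < t" "1/s + 1/t = 1"
  shows "Lp p f \<le> Lp (p * s) f * Lp (p * t) (\<lambda>r. 1)"
  using Lp_mult_le[of p s t f "\<lambda>r. 1"] assms bounded_profile_const by simp

lemma Lp2_mult_le_Lp12_Lp12:
  assumes f: "bounded_profile f" and Z: "bounded_profile Z"
  shows "Lp 2 (\<lambda>r. f r * Z r) \<le> Lp 3 (\<lambda>r. 1) * (Lp 12 f * Lp 12 Z)"
proof -
  have "Lp 2 (\<lambda>r. f r * Z r) \<le> Lp 12 f * Lp (12/5) Z" using Lp_mult_le[OF _ _ _ _ f Z, of 2 6 "6/5"] by simp
  also have "\<dots> \<le> Lp 12 f * (Lp 12 Z * Lp 3 (\<lambda>r. 1))"
    using Lp_le_Lp_mult_const[OF Z, of "12/5" 5 "5/4"] by (intro mult_left_mono) (simp_all add: Lp_nonneg)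
  finally show ?thesis by (simp add: mult_ac)
qed

lemma Lp2_mult_square_le:
  assumes f: "bounded_profile f" and Z: "bounded_profile Z"
  shows "Lp 2 (\<lambda>r. f r * Z r ^ 2) \<le> Lp 12 (\<lambda>r. 1) ^ 2 * (Lp 12 f * Lp 8 Z ^ 2)"
proof -
  have "Lp 2 (\<lambda>r. f r * Z r ^ 2) \<le> Lp 12 f * Lp (24/5) Z ^ 2"
    using Lp_mult_le[OF _ _ _ _ f bounded_profile_power[OF Z, of 2], of 2 6 "6/5"] Lp_power[of "12/5" 2 Z] by simp
  also have "\<dots> \<le> Lp 12 f * (Lp 8 Z * Lp 12 (\<lambda>r. 1)) ^ 2"
    using Lp_le_Lp_mult_const[OF Z, of "24/5" "5/3" "5/2"]
    by (intro mult_left_mono power_mono) (simp_all add: Lp_nonneg)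
  finally show ?thesis by (simp add: mult_ac power_mult_distrib)
qed

lemma Lp2_mult_cube_le:
  assumes f: "bounded_profile f" and Z: "bounded_profile Z"
  shows "Lp 2 (\<lambda>r. f r * Z r ^ 3) \<le> Lp 12 f * Lp (36/5) Z ^ 3"
  using Lp_mult_le[OF _ _ _ _ f bounded_profile_power[OF Z, of 3], of 2 6 "6/5"] Lp_power[of "12/5" 3 Z] by simp

lemma Lp2_mult_le_Lp12_Lp4:
  assumes f: "bounded_profile f" and g: "bounded_profile g"
  shows "Lp 2 (\<lambda>r. f r * g r) \<le> Lp 6 (\<lambda>r. 1) * (Lp 12 f * Lp 4 g)"
proof -
  have "Lp 2 (\<lambda>r. f r * g r) \<le> Lp 4 f * Lp 4 g" using Lp_mult_le[OF _ _ _ _ f g, of 2 2 2] by simp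
  also have "\<dots> \<le> (Lp 12 f * Lp 6 (\<lambda>r. 1)) * Lp 4 g"
    using Lp_le_Lp_mult_const[OF f, of 4 3 "3/2"] by (intro mult_right_mono) (simp_all add: Lp_nonneg)
  finally show ?thesis by (simp add: mult_ac)
qed

lemma Lp2_mult_mult_le:
  assumes f: "bounded_profile f" and g: "bounded_profile g" and Z: "bounded_profile Z"
  shows "Lp 2 (\<lambda>r. f r * (g r * Z r)) \<le> Lp 12 f * (Lp 4 g * Lp 6 Z)"
proof -
  have "Lp 2 (\<lambda>r. f r * (g r * Z r)) \<le> Lp 12 f * Lp (12/5) (\<lambda>r. g r * Z r)"
    using Lp_mult_le[OF _ _ _ _ f bounded_profile_mult[OF g Z], of 2 6 "6/5"] by simp
  also have "\<dots> \<le> Lp 12 f * (Lp 4 g * Lp 6 Z)"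
    using Lp_mult_le[OF _ _ _ _ g Z, of "12/5" "5/3" "5/2"] by (intro mult_left_mono) (simp_all add: Lp_nonneg)
  finally show ?thesis .
qed

lemma Lp2_square_mult_le:
  assumes Z: "bounded_profile Z" and g: "bounded_profile g"
  shows "Lp 2 (\<lambda>r. Z r ^ 2 * g r) \<le> Lp 8 Z ^ 2 * Lp 4 g"
  using Lp_mult_le[OF _ _ _ _ bounded_profile_power[OF Z, of 2] g, of 2 2 2] Lp_power[of 4 2 Z] by simp

lemma bounded_profile_if_continuous:
  fixes F :: "real^6 \<Rightarrow> real"
  assumes cont: "continuous_on (cball 0 1) F"
    and eq: "\<And>x. x \<in> ball 0 1 \<Longrightarrow> x \<noteq> 0 \<Longrightarrow> \<phi> (norm x) = F x"
  shows "bounded_profile \<phi>"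
proof -
  obtain C where C: "\<forall>x\<in>cball 0 1. \<bar>F x\<bar> \<le> C"
    using compact_imp_bounded[OF compact_continuous_image[OF cont compact_cball]]
    unfolding bounded_iff by auto
  have "F \<in> borel_measurable ball6"
    using cont by (intro borel_measurable_ball6_if_continuous) (auto intro: continuous_on_subset)
  moreover have "{0::real^6} \<inter> space ball6 \<in> sets ball6"
    unfolding ball6_def by (rule sets_restrict_space_iff[THEN iffD2]) (auto simp: space_restrict_space)
  ultimately have "(\<lambda>x. if x \<in> {0} then \<phi> 0 else F x) \<in> borel_measurable ball6"
    by (intro measurable_If_set) auto
  hence "(\<lambda>x. \<phi> (norm x)) \<in> borel_measurable ball6"
    by (rule measurable_cong[THEN iffD1, rotated]) (auto simp: space_ball6 eq)
  moreover have "\<bar>\<phi> (norm x)\<bar> \<le> max C \<bar>\<phi> 0\<bar>" if "x \<in> ball (0::real^6) 1" for x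
  proof (cases "x = 0")
    case False
    with that C show ?thesis by (auto simp: eq intro: le_max_iff_disj[THEN iffD2])
  qed simp
  ultimately show ?thesis unfolding bounded_profile_def by blast
qed

text \<open>Along a unit vector \<open>e\<close> the radial function is \<open>t \<mapsto> U t\<close>, so the directional derivative
  \<open>Dirs [e]\<close> is the derivative of the profile.\<close>

lemma has_real_derivative_profile:
  assumes sm: "smooth_on S (\<lambda>x::real^6. U (norm x))" and e: "norm e = 1"
    and r: "0 < r" "r *\<^sub>R e \<in> S"
  shows "(U has_real_derivative Dirs [e] (\<lambda>x. U (norm x)) (r *\<^sub>R e)) (at r)"
proof -
  define D where "D = Dirs [e] (\<lambda>x. U (norm x)) (r *\<^sub>R e)"
  have "(\<lambda>t. Dirs [] (\<lambda>x. U (norm x)) (r *\<^sub>R e + t *\<^sub>R e)) differentiable (at 0)"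
    using sm r unfolding smooth_on_def by blast
  hence d: "((\<lambda>t. U (norm (r *\<^sub>R e + t *\<^sub>R e))) has_real_derivative D) (at 0)"
    unfolding D_def by (simp add: DERIV_deriv_iff_real_differentiable)
  have "eventually (\<lambda>t. t \<in> ball 0 r) (nhds (0::real))" using r by (intro eventually_nhds_in_open) auto
  hence "eventually (\<lambda>t. U (norm (r *\<^sub>R e + t *\<^sub>R e)) = U (t + r)) (nhds 0)"
    by eventually_elim
       (use e in \<open>simp add: scaleR_add_left[symmetric] del: scaleR_add_left, simp add: add.commute\<close>)
  from DERIV_cong_ev[OF refl this refl] d have "((\<lambda>t. U (t + r)) has_real_derivative D) (at 0)" by simp
  hence "(U has_real_derivative D) (at (0 + r))" by (subst DERIV_shift)
  thus ?thesis unfolding D_def by simp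
qed

lemma smooth_radial_profile_facts:
  assumes "smooth_radial U"
  shows "\<And>r. 0 < r \<Longrightarrow> r < 1 \<Longrightarrow> (U has_real_derivative deriv U r) (at r)"
    and "bounded_profile U" and "bounded_profile (deriv U)"
proof -
  define f where "f = (\<lambda>x::real^6. U (norm x))"
  obtain S where S: "cball 0 1 \<subseteq> S" "smooth_on S f"
    using assms unfolding smooth_radial_def f_def by blast
  define e :: "real^6" where "e = axis 1 1"
  have e: "norm e = 1" unfolding e_def by simp
  have DU: "(U has_real_derivative Dirs [e] f (r *\<^sub>R e)) (at r)" if "0 < r" "r < 1" for r
  proof -
    have "r *\<^sub>R e \<in> S" using S(1) that e by (auto simp: subset_iff)
    from has_real_derivative_profile[OF S(2)[unfolded f_def] e \<open>0 < r\<close> this] show ?thesis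
      unfolding f_def .
  qed
  show "(U has_real_derivative deriv U r) (at r)" if "0 < r" "r < 1" for r
    using DU[OF that] DERIV_imp_deriv by metis
  have cont: "continuous_on (cball 0 1) (Dirs es f)" for es
    using S unfolding smooth_on_def by (auto intro: continuous_on_subset)
  show "bounded_profile U"
    by (rule bounded_profile_if_continuous[OF cont[of "[]"]]) (simp add: f_def)
  have "continuous_on (cball 0 1) (\<lambda>x::real^6. Dirs [e] f (norm x *\<^sub>R e))"
  proof (rule continuous_on_compose2[of S "Dirs [e] f"])
    show "continuous_on S (Dirs [e] f)" using S(2) unfolding smooth_on_def by blast
    show "(\<lambda>x::real^6. norm x *\<^sub>R e) ` cball 0 1 \<subseteq> S" using S(1) e by auto
  qed (intro continuous_intros)
  thus "bounded_profile (deriv U)"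
  proof (rule bounded_profile_if_continuous)
    fix x :: "real^6" assume "x \<in> ball 0 1" "x \<noteq> 0"
    hence "0 < norm x" "norm x < 1" by auto
    from DU[OF this] show "deriv U (norm x) = Dirs [e] f (norm x *\<^sub>R e)" by (rule DERIV_imp_deriv)
  qed
qed

lemma sum_list_square_le: "(sum_list xs)^2 \<le> length xs * (\<Sum>x\<leftarrow>xs. x^2)" for xs :: "real list"
  using sum_squared_le_sum_of_squares[of "\<lambda>i. xs ! i" "{..<length xs}"]
  by (simp add: sum_list_sum_nth atLeast0LessThan mult.commute)

lemma bounded_profile_sum_list:
  "(\<And>t. t \<in> set ts \<Longrightarrow> bounded_profile (f t)) \<Longrightarrow> bounded_profile (\<lambda>r. \<Sum>t\<leftarrow>ts. f t r)"
  by (induction ts) (auto intro: bounded_profile_add bounded_profile_const)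

lemma ball_integral_sum_squares:
  "(\<And>t. t \<in> set ts \<Longrightarrow> bounded_profile t) \<Longrightarrow>
     ball_integral (\<lambda>r. \<Sum>t\<leftarrow>ts. (t r)^2) = (\<Sum>t\<leftarrow>ts. Lp 2 t ^ 2)"
proof (induction ts)
  case (Cons t ts)
  have "integrable ball6 (\<lambda>x. (t (norm x))^2)" "integrable ball6 (\<lambda>x. \<Sum>t\<leftarrow>ts. (t (norm x))^2)"
    using Cons.prems
    by (auto intro!: integrable_bounded_profile bounded_profile_power bounded_profile_sum_list)
  thus ?case using Cons ball_integral_square[of t] by (simp add: ball_integral_def)
qed (simp add: ball_integral_def)

lemma square_add_square_le_sum_list:
  fixes a b K :: real and xs :: "real list"
  assumes "\<bar>a\<bar> \<le> K * (\<Sum>x\<leftarrow>xs. \<bar>x\<bar>)" and "\<bar>b\<bar> \<le> K * (\<Sum>x\<leftarrow>xs. \<bar>x\<bar>)"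
  shows "a^2 + b^2 \<le> 2 * K^2 * length xs * (\<Sum>x\<leftarrow>xs. x^2)"
proof -
  define M where "M = (\<Sum>x\<leftarrow>xs. \<bar>x\<bar>)"
  have "a^2 \<le> (K * M)^2" "b^2 \<le> (K * M)^2"
    using assms unfolding M_def by (metis abs_ge_zero order_trans power2_abs power_mono)+
  hence "a^2 + b^2 \<le> 2 * K^2 * M^2" by (simp add: power_mult_distrib)
  also have "M^2 \<le> length xs * (\<Sum>x\<leftarrow>xs. x^2)"
    using sum_list_square_le[of "map abs xs"] unfolding M_def by (simp add: o_def)
  hence "2 * K^2 * M^2 \<le> 2 * K^2 * (length xs * (\<Sum>x\<leftarrow>xs. x^2))" by (intro mult_left_mono) auto
  finally show ?thesis by (simp add: mult_ac)
qed

lemma H2sq_zero: "H2sq (\<lambda>r. 0) = 0"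
proof -
  have "deriv (\<lambda>r::real. 0::real) = (\<lambda>r. 0)" by (intro ext DERIV_imp_deriv DERIV_const)
  thus ?thesis unfolding H2sq_def by simp
qed

text \<open>The pointwise hypotheses are only required for \<open>0 < \<rho> < 1\<close>: at \<open>\<rho> = 0\<close> the nonlinearity divides by
  zero (and is junk), but the origin is a null set.\<close>

lemma Hnorm_le_if_majorized:
  assumes fst_w: "fst w = (\<lambda>r. 0)"
    and bound: "\<And>r. 0 < r \<Longrightarrow> r < 1 \<Longrightarrow>
      \<bar>snd w r\<bar> \<le> K * (\<Sum>t\<leftarrow>ts. \<bar>t r\<bar>) \<and> \<bar>deriv (snd w) r\<bar> \<le> K * (\<Sum>t\<leftarrow>ts. \<bar>t r\<bar>)"
    and terms: "\<And>t. t \<in> set ts \<Longrightarrow> bounded_profile t \<and> Lp 2 t \<le> c * S"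
    and K: "0 \<le> K" and cS: "0 \<le> c * S"
  shows "Hnorm w \<le> sqrt 2 * K * length ts * (c * S)"
proof -
  define g where "g = snd w"
  define n where "n = real (length ts)"
  define Q where "Q = (\<lambda>r. 2 * K^2 * n * (\<Sum>t\<leftarrow>ts. (t r)^2))"
  have Q: "bounded_profile Q" unfolding Q_def using terms
    by (intro bounded_profile_mult bounded_profile_const bounded_profile_sum_list bounded_profile_power) auto
  have "H1sq g \<le> ball_integral Q"
    unfolding H1sq_ball6 ball_integral_def
  proof (rule integral_mono_AE'[OF integrable_bounded_profile[OF Q]])
    show "AE x in ball6. (g (norm x))^2 + (deriv g (norm x))^2 \<le> Q (norm x)"
      using AE_ball6_nonzero
      by eventually_elim
         (use bound square_add_square_le_sum_list[of _ K "map (\<lambda>t. t _) ts"] in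
           \<open>auto simp: Q_def g_def n_def o_def\<close>)
    show "AE x in ball6. 0 \<le> Q (norm x)"
      unfolding Q_def n_def by (intro AE_I2 mult_nonneg_nonneg sum_list_nonneg) auto
  qed
  also have "ball_integral Q = 2 * K^2 * n * (\<Sum>t\<leftarrow>ts. Lp 2 t ^ 2)"
    unfolding Q_def using ball_integral_sum_squares[of ts] terms by (simp add: ball_integral_def)
  also have "\<dots> \<le> 2 * K^2 * n * (n * (c * S)^2)"
  proof -
    have "(\<Sum>t\<leftarrow>ts. Lp 2 t ^ 2) \<le> (\<Sum>t\<leftarrow>ts. (c * S)^2)"
      using terms by (intro sum_list_mono power_mono) (auto simp: Lp_nonneg)
    thus ?thesis unfolding n_def by (intro mult_left_mono) (auto simp: sum_list_triv)
  qed
  also have "\<dots> = (sqrt 2 * K * n * (c * S))^2"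
    by (simp add: power_mult_distrib power2_eq_square)
  finally have "sqrt (H1sq g) \<le> sqrt 2 * K * n * (c * S)"
    using K cS unfolding n_def by (simp add: real_le_lsqrt real_sqrt_le_iff real_sqrt_le_mono)
  moreover have "Hnorm w = sqrt (H1sq g)" unfolding Hnorm_def g_def fst_w H2sq_zero by simp
  ultimately show ?thesis unfolding n_def by simp
qed

definition nl_terms :: "(real \<Rightarrow> real) \<Rightarrow> (real \<Rightarrow> real) list" where
  "nl_terms U = [\<lambda>r. U r ^ 2, \<lambda>r. U r ^ 3, \<lambda>r. U r ^ 4, \<lambda>r. U r * deriv U r, \<lambda>r. U r ^ 2 * deriv U r]"

definition nl_bound :: "(real \<Rightarrow> real) \<Rightarrow> real" where
  "nl_bound U = Lp 12 U ^ 2 + Lp 9 U ^ 3 + Lp 8 U ^ 4 + Lp 4 (deriv U) ^ 2"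

lemma sum_abs_nl_terms: "(\<Sum>t\<leftarrow>nl_terms U. \<bar>t r\<bar>) = nl_majorant (U r) (deriv U r)"
  by (simp add: nl_terms_def nl_majorant_def abs_mult power_abs add.assoc)

lemma nl_bound_nonneg: "0 \<le> nl_bound U"
  unfolding nl_bound_def by (simp add: Lp_nonneg)

lemma nl_bound_ge:
  shows "Lp 12 U ^ 2 \<le> nl_bound U" "Lp 9 U ^ 3 \<le> nl_bound U" "Lp 8 U ^ 4 \<le> nl_bound U"
    and "Lp 12 U * Lp 4 (deriv U) \<le> nl_bound U" "Lp 8 U ^ 2 * Lp 4 (deriv U) \<le> nl_bound U"
proof -
  define a b c d where "a = Lp 12 U" and "b = Lp 9 U" and "c = Lp 8 U" and "d = Lp 4 (deriv U)"
  have "0 \<le> a" "0 \<le> b" "0 \<le> c" "0 \<le> d" unfolding a_def b_def c_def d_def by (simp_all add: Lp_nonneg)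
  hence "0 \<le> a^2" "0 \<le> b^3" "0 \<le> c^4" "0 \<le> d^2" "0 \<le> a * d" "0 \<le> c^2 * d" by simp_all
  moreover have "2 * a * d \<le> a^2 + d^2" "2 * c^2 * d \<le> c^4 + d^2"
    using sum_squares_bound[of a d] sum_squares_bound[of "c^2" d] by (simp_all flip: power_mult)
  ultimately show "a^2 \<le> nl_bound U" "b^3 \<le> nl_bound U" "c^4 \<le> nl_bound U"
    "a * d \<le> nl_bound U" "c^2 * d \<le> nl_bound U"
    unfolding nl_bound_def a_def[symmetric] b_def[symmetric] c_def[symmetric] d_def[symmetric]
    by linarith+
qed

lemma Lp2_nl_terms_le:
  assumes "smooth_radial U" and "t \<in> set (nl_terms U)"
  shows "bounded_profile t \<and>
    Lp 2 t \<le> (1 + Lp 6 (\<lambda>r. 1) + Lp 6 (\<lambda>r. 1) ^ 2 + Lp 18 (\<lambda>r. 1) ^ 3) * nl_bound U"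
proof
  have U: "bounded_profile U" and dU: "bounded_profile (deriv U)"
    using smooth_radial_profile_facts[OF assms(1)] by auto
  show "bounded_profile t"
    using assms(2) U dU by (auto simp: nl_terms_def intro: bounded_profile_power bounded_profile_mult)
  define K where "K = 1 + Lp 6 (\<lambda>r::real. 1::real) + Lp 6 (\<lambda>r::real. 1::real) ^ 2 + Lp 18 (\<lambda>r::real. 1::real) ^ 3"
  have K: "0 \<le> Lp 6 (\<lambda>r::real. 1::real)" "Lp 6 (\<lambda>r::real. 1::real) \<le> K"
    "0 \<le> Lp 6 (\<lambda>r::real. 1::real) ^ 2" "Lp 6 (\<lambda>r::real. 1::real) ^ 2 \<le> K"
    "0 \<le> Lp 18 (\<lambda>r::real. 1::real) ^ 3" "Lp 18 (\<lambda>r::real. 1::real) ^ 3 \<le> K" "1 \<le> K"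
    unfolding K_def by (simp_all add: Lp_nonneg)
  have scale: "k * P \<le> K * nl_bound U" if "0 \<le> k" "k \<le> K" "0 \<le> P" "P \<le> nl_bound U" for k P
    using mult_mono[OF that(2,4)] that by (simp add: nl_bound_nonneg)
  have "Lp 2 (\<lambda>r. U r ^ 2) \<le> Lp 6 (\<lambda>r. 1) ^ 2 * Lp 12 U ^ 2"
    using Lp_power[of 2 2 U] power_mono[OF Lp_le_Lp_mult_const[OF U, of 4 3 "3/2"], of 2]
    by (simp add: Lp_nonneg power_mult_distrib mult.commute)
  moreover have "Lp 2 (\<lambda>r. U r ^ 3) \<le> Lp 18 (\<lambda>r. 1) ^ 3 * Lp 9 U ^ 3"
    using Lp_power[of 2 3 U] power_mono[OF Lp_le_Lp_mult_const[OF U, of 6 "3/2" 3], of 3]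
    by (simp add: Lp_nonneg power_mult_distrib mult.commute)
  moreover have "Lp 2 (\<lambda>r. U r ^ 4) = Lp 8 U ^ 4" using Lp_power[of 2 4 U] by simp
  ultimately have "Lp 2 t \<le> K * nl_bound U"
    using assms(2) unfolding nl_terms_def
    using scale[OF K(3,4) _ nl_bound_ge(1)] scale[OF K(5,6) _ nl_bound_ge(2)]
      scale[of 1, OF _ K(7) _ nl_bound_ge(3)]
      order_trans[OF Lp2_mult_le_Lp12_Lp4[OF U dU] scale[OF K(1,2) _ nl_bound_ge(4)]]
      order_trans[OF Lp2_square_mult_le[OF U dU] scale[of 1, OF _ K(7) _ nl_bound_ge(5), simplified]]
    by (auto simp: Lp_nonneg)
  thus "Lp 2 t \<le> (1 + Lp 6 (\<lambda>r. 1) + Lp 6 (\<lambda>r. 1) ^ 2 + Lp 18 (\<lambda>r. 1) ^ 3) * nl_bound U"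
    unfolding K_def .
qed

lemma nl_pointwise_facts:
  assumes "smooth_radial (fst u)" "0 < r" "r < 1"
  shows "snd (Nvec u) r = nl r (fst u r)"
    and "(snd (Nvec u) has_real_derivative nl_deriv r (fst u r) (deriv (fst u) r)) (at r)"
  using snd_Nvec_eq has_real_derivative_snd_Nvec smooth_radial_profile_facts(1)[OF assms(1)] assms(2,3)
  by auto

lemma Hnorm_Nvec_le: "\<exists>C>0. \<forall>u. smooth_radial (fst u) \<longrightarrow> Hnorm (Nvec u) \<le> C * nl_bound (fst u)"
proof -
  define K where "K = 1 + Lp 6 (\<lambda>r::real. 1::real) + Lp 6 (\<lambda>r::real. 1::real) ^ 2 + Lp 18 (\<lambda>r::real. 1::real) ^ 3"
  have K: "1 \<le> K" unfolding K_def by (simp add: Lp_nonneg)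
  have "Hnorm (Nvec u) \<le> (sqrt 2 * 15000 * K) * nl_bound (fst u)" if sm: "smooth_radial (fst u)" for u
  proof -
    have "Hnorm (Nvec u) \<le> sqrt 2 * 3000 * length (nl_terms (fst u)) * (K * nl_bound (fst u))"
    proof (rule Hnorm_le_if_majorized)
      fix r :: real assume r: "0 < r" "r < 1"
      have "deriv (snd (Nvec u)) r = nl_deriv r (fst u r) (deriv (fst u) r)"
        using nl_pointwise_facts(2)[OF sm r] by (rule DERIV_imp_deriv)
      thus "\<bar>snd (Nvec u) r\<bar> \<le> 3000 * (\<Sum>t\<leftarrow>nl_terms (fst u). \<bar>t r\<bar>) \<and>
            \<bar>deriv (snd (Nvec u)) r\<bar> \<le> 3000 * (\<Sum>t\<leftarrow>nl_terms (fst u). \<bar>t r\<bar>)"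
        using nl_pointwise_facts(1)[OF sm r] abs_nl_le[of r "fst u r" "deriv (fst u) r"]
          abs_nl_deriv_le[of r "fst u r" "deriv (fst u) r"] nl_majorant_nonneg r
        unfolding sum_abs_nl_terms by auto
    qed (use Lp2_nl_terms_le[OF sm] K nl_bound_nonneg in \<open>auto simp: Nvec_def K_def\<close>)
    thus ?thesis by (simp add: nl_terms_def)
  qed
  moreover have "0 < sqrt 2 * 15000 * K" using K by simp
  ultimately show ?thesis by blast
qed

definition nl_diff_terms :: "(real \<Rightarrow> real) \<Rightarrow> (real \<Rightarrow> real) \<Rightarrow> (real \<Rightarrow> real) list" where
  "nl_diff_terms U V = (let w = (\<lambda>r. U r - V r); d = (\<lambda>r. deriv U r - deriv V r) in
     [\<lambda>r. w r * U r, \<lambda>r. w r * V r, \<lambda>r. w r * U r ^ 2, \<lambda>r. w r * V r ^ 2,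
      \<lambda>r. w r * U r ^ 3, \<lambda>r. w r * V r ^ 3, \<lambda>r. w r * deriv U r,
      \<lambda>r. w r * (deriv U r * U r), \<lambda>r. w r * (deriv U r * V r),
      \<lambda>r. V r * d r, \<lambda>r. V r ^ 2 * d r])"

definition nl_diff_bound :: "(real \<Rightarrow> real) \<Rightarrow> (real \<Rightarrow> real) \<Rightarrow> real" where
  "nl_diff_bound U V = Lp 12 (\<lambda>r. U r - V r) *
       (Lp 12 U + Lp 12 V + Lp 8 U ^ 2 + Lp 8 V ^ 2 + Lp 4 (deriv U) * (1 + Lp 6 U + Lp 6 V)
        + Lp (36/5) U ^ 3 + Lp (36/5) V ^ 3)
     + Lp 4 (\<lambda>r. deriv U r - deriv V r) * (Lp 12 V + Lp 8 V ^ 2)"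

lemma sum_abs_nl_diff_terms:
  "(\<Sum>t\<leftarrow>nl_diff_terms U V. \<bar>t r\<bar>) = nl_diff_majorant (U r) (V r) (deriv U r) (deriv V r)"
  by (simp add: nl_diff_terms_def nl_diff_majorant_def abs_mult power_abs add.assoc mult.assoc)

lemma nl_diff_bound_nonneg: "0 \<le> nl_diff_bound U V"
  unfolding nl_diff_bound_def by (simp add: Lp_nonneg)

lemma nl_diff_bound_ge:
  fixes U V :: "real \<Rightarrow> real"
  defines "w \<equiv> \<lambda>r. U r - V r" and "d \<equiv> \<lambda>r. deriv U r - deriv V r"
  shows "Lp 12 w * Lp 12 U \<le> nl_diff_bound U V" "Lp 12 w * Lp 12 V \<le> nl_diff_bound U V"
    "Lp 12 w * Lp 8 U ^ 2 \<le> nl_diff_bound U V" "Lp 12 w * Lp 8 V ^ 2 \<le> nl_diff_bound U V"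
    "Lp 12 w * Lp (36/5) U ^ 3 \<le> nl_diff_bound U V" "Lp 12 w * Lp (36/5) V ^ 3 \<le> nl_diff_bound U V"
    "Lp 12 w * Lp 4 (deriv U) \<le> nl_diff_bound U V"
    "Lp 12 w * (Lp 4 (deriv U) * Lp 6 U) \<le> nl_diff_bound U V"
    "Lp 12 w * (Lp 4 (deriv U) * Lp 6 V) \<le> nl_diff_bound U V"
    "Lp 12 V * Lp 4 d \<le> nl_diff_bound U V" "Lp 8 V ^ 2 * Lp 4 d \<le> nl_diff_bound U V"
proof -
  define M where "M = Lp 12 U + Lp 12 V + Lp 8 U ^ 2 + Lp 8 V ^ 2 + Lp 4 (deriv U) * (1 + Lp 6 U + Lp 6 V)
        + Lp (36/5) U ^ 3 + Lp (36/5) V ^ 3"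
  define N where "N = Lp 12 V + Lp 8 V ^ 2"
  have S: "nl_diff_bound U V = Lp 12 w * M + N * Lp 4 d"
    unfolding nl_diff_bound_def M_def N_def w_def d_def by simp
  have "0 \<le> M" "0 \<le> N" unfolding M_def N_def by (simp_all add: Lp_nonneg)
  hence viaM: "Lp 12 w * P \<le> nl_diff_bound U V" if "P \<le> M" for P
    using mult_left_mono[OF that, of "Lp 12 w"] unfolding S by (simp add: Lp_nonneg add_increasing2)
  have viaN: "P * Lp 4 d \<le> nl_diff_bound U V" if "P \<le> N" for P
    using mult_right_mono[OF that, of "Lp 4 d"] \<open>0 \<le> M\<close> unfolding S by (simp add: Lp_nonneg add_increasing)
  show "Lp 12 w * Lp 12 U \<le> nl_diff_bound U V" "Lp 12 w * Lp 12 V \<le> nl_diff_bound U V"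
    "Lp 12 w * Lp 8 U ^ 2 \<le> nl_diff_bound U V" "Lp 12 w * Lp 8 V ^ 2 \<le> nl_diff_bound U V"
    "Lp 12 w * Lp (36/5) U ^ 3 \<le> nl_diff_bound U V" "Lp 12 w * Lp (36/5) V ^ 3 \<le> nl_diff_bound U V"
    "Lp 12 w * Lp 4 (deriv U) \<le> nl_diff_bound U V"
    "Lp 12 w * (Lp 4 (deriv U) * Lp 6 U) \<le> nl_diff_bound U V"
    "Lp 12 w * (Lp 4 (deriv U) * Lp 6 V) \<le> nl_diff_bound U V"
    by (intro viaM; simp add: M_def Lp_nonneg distrib_left)+
  show "Lp 12 V * Lp 4 d \<le> nl_diff_bound U V" "Lp 8 V ^ 2 * Lp 4 d \<le> nl_diff_bound U V"
    by (intro viaN; simp add: N_def Lp_nonneg)+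
qed

lemma Lp2_nl_diff_terms_le:
  assumes "smooth_radial U" "smooth_radial V" and "t \<in> set (nl_diff_terms U V)"
  shows "bounded_profile t \<and>
    Lp 2 t \<le> (1 + Lp 3 (\<lambda>r. 1) + Lp 6 (\<lambda>r. 1) + Lp 12 (\<lambda>r. 1) ^ 2) * nl_diff_bound U V"
proof
  have U: "bounded_profile U" and dU: "bounded_profile (deriv U)"
    and V: "bounded_profile V" and dV: "bounded_profile (deriv V)"
    using smooth_radial_profile_facts assms(1,2) by auto
  define w where "w = (\<lambda>r. U r - V r)"
  define d where "d = (\<lambda>r. deriv U r - deriv V r)"
  have w: "bounded_profile w" and d: "bounded_profile d"
    unfolding w_def d_def using U V dU dV by (auto intro: bounded_profile_diff)
  have ts: "nl_diff_terms U V = [\<lambda>r. w r * U r, \<lambda>r. w r * V r, \<lambda>r. w r * U r ^ 2, \<lambda>r. w r * V r ^ 2,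
      \<lambda>r. w r * U r ^ 3, \<lambda>r. w r * V r ^ 3, \<lambda>r. w r * deriv U r,
      \<lambda>r. w r * (deriv U r * U r), \<lambda>r. w r * (deriv U r * V r), \<lambda>r. V r * d r, \<lambda>r. V r ^ 2 * d r]"
    unfolding nl_diff_terms_def w_def d_def by simp
  show "bounded_profile t"
    using assms(3) U V dU w d unfolding ts by (auto intro: bounded_profile_power bounded_profile_mult)
  define K where "K = 1 + Lp 3 (\<lambda>r::real. 1::real) + Lp 6 (\<lambda>r::real. 1::real) + Lp 12 (\<lambda>r::real. 1::real) ^ 2"
  have K: "0 \<le> Lp 3 (\<lambda>r::real. 1::real)" "Lp 3 (\<lambda>r::real. 1::real) \<le> K"
    "0 \<le> Lp 6 (\<lambda>r::real. 1::real)" "Lp 6 (\<lambda>r::real. 1::real) \<le> K"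
    "0 \<le> Lp 12 (\<lambda>r::real. 1::real) ^ 2" "Lp 12 (\<lambda>r::real. 1::real) ^ 2 \<le> K" "(1::real) \<le> K"
    unfolding K_def by (simp_all add: Lp_nonneg)
  have scale: "k * P \<le> K * nl_diff_bound U V" if "0 \<le> k" "k \<le> K" "0 \<le> P" "P \<le> nl_diff_bound U V"
    for k P using mult_mono[OF that(2,4)] that by (simp add: nl_diff_bound_nonneg)
  note B = nl_diff_bound_ge[where U=U and V=V, folded w_def d_def]
  note [simp] = Lp_nonneg
  have "Lp 2 t \<le> K * nl_diff_bound U V"
    using assms(3) unfolding ts
    using order_trans[OF Lp2_mult_le_Lp12_Lp12[OF w U] scale[OF K(1,2) _ B(1)]]
      order_trans[OF Lp2_mult_le_Lp12_Lp12[OF w V] scale[OF K(1,2) _ B(2)]]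
      order_trans[OF Lp2_mult_square_le[OF w U] scale[OF K(5,6) _ B(3)]]
      order_trans[OF Lp2_mult_square_le[OF w V] scale[OF K(5,6) _ B(4)]]
      order_trans[OF Lp2_mult_cube_le[OF w U] scale[of 1, OF _ K(7) _ B(5), simplified]]
      order_trans[OF Lp2_mult_cube_le[OF w V] scale[of 1, OF _ K(7) _ B(6), simplified]]
      order_trans[OF Lp2_mult_le_Lp12_Lp4[OF w dU] scale[OF K(3,4) _ B(7)]]
      order_trans[OF Lp2_mult_mult_le[OF w dU U] scale[of 1, OF _ K(7) _ B(8), simplified]]
      order_trans[OF Lp2_mult_mult_le[OF w dU V] scale[of 1, OF _ K(7) _ B(9), simplified]]
      order_trans[OF Lp2_mult_le_Lp12_Lp4[OF V d] scale[OF K(3,4) _ B(10)]]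
      order_trans[OF Lp2_square_mult_le[OF V d] scale[of 1, OF _ K(7) _ B(11), simplified]]
    by auto
  thus "Lp 2 t \<le> (1 + Lp 3 (\<lambda>r. 1) + Lp 6 (\<lambda>r. 1) + Lp 12 (\<lambda>r. 1) ^ 2) * nl_diff_bound U V"
    unfolding K_def .
qed

lemma Hnorm_Nvec_diff_le:
  "\<exists>C>0. \<forall>u v. smooth_radial (fst u) \<and> smooth_radial (fst v) \<longrightarrow>
     Hnorm (pdiff (Nvec u) (Nvec v)) \<le> C * nl_diff_bound (fst u) (fst v)"
proof -
  define K where "K = 1 + Lp 3 (\<lambda>r::real. 1::real) + Lp 6 (\<lambda>r::real. 1::real) + Lp 12 (\<lambda>r::real. 1::real) ^ 2"
  have K: "1 \<le> K" unfolding K_def by (simp add: Lp_nonneg)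
  have "Hnorm (pdiff (Nvec u) (Nvec v)) \<le> (sqrt 2 * 220000 * K) * nl_diff_bound (fst u) (fst v)"
    if smu: "smooth_radial (fst u)" and smv: "smooth_radial (fst v)" for u v
  proof -
    have "Hnorm (pdiff (Nvec u) (Nvec v))
        \<le> sqrt 2 * 20000 * length (nl_diff_terms (fst u) (fst v)) * (K * nl_diff_bound (fst u) (fst v))"
    proof (rule Hnorm_le_if_majorized)
      fix r :: real assume r: "0 < r" "r < 1"
      define x y dx dy where "x = fst u r" and "y = fst v r" and "dx = deriv (fst u) r" and "dy = deriv (fst v) r"
      have "((\<lambda>s. snd (Nvec u) s - snd (Nvec v) s) has_real_derivative nl_deriv r x dx - nl_deriv r y dy) (at r)"
        unfolding x_def y_def dx_def dy_def
        by (intro DERIV_diff nl_pointwise_facts(2) smu smv r)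
      hence "deriv (snd (pdiff (Nvec u) (Nvec v))) r = nl_deriv r x dx - nl_deriv r y dy"
        unfolding pdiff_def by (simp add: DERIV_imp_deriv)
      moreover have "snd (pdiff (Nvec u) (Nvec v)) r = nl r x - nl r y"
        unfolding pdiff_def x_def y_def using nl_pointwise_facts(1) smu smv r by simp
      ultimately show "\<bar>snd (pdiff (Nvec u) (Nvec v)) r\<bar> \<le> 20000 * (\<Sum>t\<leftarrow>nl_diff_terms (fst u) (fst v). \<bar>t r\<bar>) \<and>
          \<bar>deriv (snd (pdiff (Nvec u) (Nvec v))) r\<bar> \<le> 20000 * (\<Sum>t\<leftarrow>nl_diff_terms (fst u) (fst v). \<bar>t r\<bar>)"
        using abs_nl_diff_le[of r x y dx dy] abs_nl_deriv_diff_le[of r x dx y dy]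
          nl_diff_majorant_nonneg[of x y dx dy] r
        unfolding sum_abs_nl_diff_terms x_def y_def dx_def dy_def by auto
    qed (use Lp2_nl_diff_terms_le[OF smu smv] K nl_diff_bound_nonneg
         in \<open>auto simp: Nvec_def pdiff_def K_def\<close>)
    thus ?thesis by (simp add: nl_diff_terms_def)
  qed
  moreover have "0 < sqrt 2 * 220000 * K" using K by simp
  ultimately show ?thesis by blast
qed

theorem mainTheorem12:
  shows "\<exists>C>0. \<forall>u v :: (real \<Rightarrow> real) \<times> (real \<Rightarrow> real).
    smooth_radial (fst u) \<and> smooth_radial (snd u) \<and>
    smooth_radial (fst v) \<and> smooth_radial (snd v) \<longrightarrow>
      Hnorm (Nvec u) \<le> C * (Lp 12 (fst u) ^ 2 + Lp 9 (fst u) ^ 3 + Lp 8 (fst u) ^ 4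
                              + Lp 4 (deriv (fst u)) ^ 2)
    \<and> Hnorm (pdiff (Nvec u) (Nvec v)) \<le>
        C * (Lp 12 (\<lambda>r. fst u r - fst v r) *
               (Lp 12 (fst u) + Lp 12 (fst v) + Lp 8 (fst u) ^ 2 + Lp 8 (fst v) ^ 2
                + Lp 4 (deriv (fst u)) * (1 + Lp 6 (fst u) + Lp 6 (fst v))
                + Lp (36/5) (fst u) ^ 3 + Lp (36/5) (fst v) ^ 3)
             + Lp 4 (\<lambda>r. deriv (fst u) r - deriv (fst v) r) *
               (Lp 12 (fst v) + Lp 8 (fst v) ^ 2))"
proof -
  obtain A where A: "A > 0" "\<And>u. smooth_radial (fst u) \<Longrightarrow> Hnorm (Nvec u) \<le> A * nl_bound (fst u)"
    using Hnorm_Nvec_le by blast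
  obtain B where B: "B > 0" "\<And>u v. smooth_radial (fst u) \<Longrightarrow> smooth_radial (fst v) \<Longrightarrow>
      Hnorm (pdiff (Nvec u) (Nvec v)) \<le> B * nl_diff_bound (fst u) (fst v)"
    using Hnorm_Nvec_diff_le by blast
  have "A * nl_bound U \<le> max A B * nl_bound U" "B * nl_diff_bound U V \<le> max A B * nl_diff_bound U V" for U V
    by (simp_all add: mult_right_mono nl_bound_nonneg nl_diff_bound_nonneg)
  hence "\<forall>u v. smooth_radial (fst u) \<and> smooth_radial (fst v) \<longrightarrow>
      Hnorm (Nvec u) \<le> max A B * nl_bound (fst u) \<and>
      Hnorm (pdiff (Nvec u) (Nvec v)) \<le> max A B * nl_diff_bound (fst u) (fst v)"
    using A(2) B(2) order_trans by blast
  moreover have "0 < max A B" using A by simp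
  ultimately show ?thesis unfolding nl_bound_def nl_diff_bound_def by blast
qed

end
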